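(* Let $\mathcal{R}=(G_0,e\to R)$ be an expanding replacement system with rearrangement group $\mathcal{G}$ of $X(G_0)$. The action of $\mathcal{G}$ on the directed graph $K^1(\mathcal{G})$ is proper; in particular, for any vertex $[f]$ of $K^1(\mathcal{G})$ with $f\colon X(G_0)\to X(G)$, the stabilizer of $[f]$ in $\mathcal{G}$ is isomorphic to the automorphism group of the directed graph $G$.
   Context: A graph is a finite directed multigraph (loops, multiple edges allowed); isomorphisms preserve directions. The replacement rule $e\to R$: $e$ a non-loop edge from $v$ to $w$, $R$ a graph containing $v,w$ (initial, terminal vertices). Replacing an edge $\varepsilon$ of a graph $G$: delete $\varepsilon$, glue in a copy of $R$ identifying initial/terminal vertices with those of $\varepsilon$; new edges $\varepsilon\zeta$ ($\zeta\in E(R)$). For a set $S$ of edges of $G$, $G\triangleleft S$ is obtained by replacing each edge of $S$; an expansion of $G$ is a graph obtained by finitely many replacements. $\mathcal{R}$ expanding means: $G_0$ and $R$ have no isolated vertices, initial and terminal vertices of $R$ are not adjacent, $R$ has $\ge3$ vertices and $\ge2$ edges. For any graph $G$, $X(G)$ is the limit space of $(G,e\to R)$: $X(G)=\Omega_G/\sim$ where $\Omega_G=E(G)\times E(R)^{\mathbb{N}}$ and $\varepsilon_0\varepsilon_1\cdots\sim\varepsilon_0'\varepsilon_1'\cdots$ iff for all $n$ the edges $\varepsilon_0\cdots\varepsilon_n$, $\varepsilon_0'\cdots\varepsilon_n'$ of the $n$-fold full expansion of $G$ share a vertex. For an edge $\epsilon$ of an expansion of $G$, the cell $C(\epsilon)\subseteq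 X(G)$ is the image of the sequences with prefix $\epsilon$. For cells $C(\epsilon)\subseteq X(G)$, $C(\epsilon')\subseteq X(G')$ with $\epsilon,\epsilon'$ both loops or both non-loops, the canonical homeomorphism is induced by $\epsilon\zeta_1\zeta_2\cdots\mapsto\epsilon'\zeta_1\zeta_2\cdots$. A rearrangement $X(G)\to X(G')$ is a homeomorphism restricting to canonical homeomorphisms on the cells of some finite cover of $X(G)$ by cells with disjoint interiors (interior = cell minus images of endpoints of $\epsilon$); $\mathcal{G}$ is the group of rearrangements $X(G_0)\to X(G_0)$. For a graph isomorphism $\varphi\colon G_1\to G_2$, the base isomorphism $X(G_1)\to X(G_2)$ maps each $C(\epsilon)$ ($\epsilon\in E(G_1)$) canonically onto $C(\varphi(\epsilon))$. $x_S\colon X(G)\to X(G\triangleleft S)$ is the rearrangement mapping each cell $C(\epsilon)\subseteq X(G)$, $\epsilon$ an edge of $G\triangleleft S$, canonically onto the cell $C(\epsilon)\subseteq X(G\triangleleft S)$. A simple expansion morphism is $\varphi\circ x_{\{\epsilon\}}$ with $\varphi$ a base isomorphism. Rearrangements $f\colon X(G)\to X(G_1)$ and $g\colon X(G)\to X(G_2)$ are range equivalent if $g=\varphi\circ f$ for a base isomorphism $\varphi$; $[f]$ is the class. $K^1(\mathcal{G})$ is the directed graph whose vertices are range-equivalence classes of rearrangements with domain $X(G_0)$, with an edge from $[f]$ to $[g]$ when $g=x\circ f$ for some simple expansion morphism $x$. $\mathcal{G}$ acts by $[f]\cdot g=[f\circ g]$. *)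

theory Defs
  imports "HOL-Analysis.Analysis" "HOL-Algebra.Group"
begin

record ('v, 'e) dgraph =
  verts :: "'v set"
  edges :: "'e set"
  src   :: "'e \<Rightarrow> 'v"
  tgt   :: "'e \<Rightarrow> 'v"

definition fin_graph :: "('v, 'e) dgraph \<Rightarrow> bool" where
  "fin_graph G \<longleftrightarrow> finite (verts G) \<and> finite (edges G) \<and>
     (\<forall>e\<in>edges G. src G e \<in> verts G \<and> tgt G e \<in> verts G)"

definition no_isolated :: "('v, 'e) dgraph \<Rightarrow> bool" where
  "no_isolated G \<longleftrightarrow> (\<forall>v\<in>verts G. \<exists>e\<in>edges G. src G e = v \<or> tgt G e = v)"

definition graph_iso :: "('v, 'e) dgraph \<Rightarrow> ('u, 'd) dgraph \<Rightarrow> ('v \<Rightarrow> 'u) \<Rightarrow> ('e \<Rightarrow> 'd) \<Rightarrow> bool" where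
  "graph_iso G H \<phi>V \<phi>E \<longleftrightarrow> bij_betw \<phi>V (verts G) (verts H) \<and> bij_betw \<phi>E (edges G) (edges H) \<and>
     (\<forall>e\<in>edges G. src H (\<phi>E e) = \<phi>V (src G e) \<and> tgt H (\<phi>E e) = \<phi>V (tgt G e))"

definition aut_group :: "('v, 'e) dgraph \<Rightarrow> (('v \<Rightarrow> 'v) \<times> ('e \<Rightarrow> 'e)) monoid" where
  "aut_group G = \<lparr> carrier = {(\<phi>V, \<phi>E). graph_iso G G \<phi>V \<phi>E \<and>
                              \<phi>V \<in> extensional (verts G) \<and> \<phi>E \<in> extensional (edges G)},
                  mult = (\<lambda>(a, b) (c, d). (compose (verts G) a c, compose (edges G) b d)),
                  one = (restrict id (verts G), restrict id (edges G)) \<rparr>"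

text \<open>The replacement rule \<open>e \<rightarrow> R\<close> is given by the graph \<open>R\<close> together with its
  initial vertex \<open>vi\<close> and terminal vertex \<open>vt\<close>.\<close>

definition expanding :: "('v, 'e) dgraph \<Rightarrow> ('w, 'r) dgraph \<Rightarrow> 'w \<Rightarrow> 'w \<Rightarrow> bool" where
  "expanding G0 R vi vt \<longleftrightarrow>
     fin_graph G0 \<and> fin_graph R \<and> no_isolated G0 \<and> no_isolated R \<and>
     vi \<in> verts R \<and> vt \<in> verts R \<and> vi \<noteq> vt \<and>
     (\<forall>z\<in>edges R. \<not> (src R z = vi \<and> tgt R z = vt) \<and> \<not> (src R z = vt \<and> tgt R z = vi)) \<and>
     card (verts R) \<ge> 3 \<and> card (edges R) \<ge> 2"

text \<open>Edges of expansions of \<open>G\<close> are words \<open>(\<epsilon>, [\<zeta>1,...,\<zeta>k])\<close>. Vertices of expansions are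
  either original vertices \<open>Inl v\<close>, or \<open>Inr (\<epsilon>, zs, x)\<close>: the copy of the (non initial, non
  terminal) vertex \<open>x\<close> of \<open>R\<close> created when replacing the edge \<open>(\<epsilon>, zs)\<close>.\<close>

fun xends :: "('w, 'r) dgraph \<Rightarrow> 'w \<Rightarrow> 'w \<Rightarrow> 'e \<Rightarrow> 'r list \<Rightarrow>
      ('v + ('e \<times> 'r list \<times> 'w)) \<times> ('v + ('e \<times> 'r list \<times> 'w)) \<Rightarrow> 'r list \<Rightarrow>
      ('v + ('e \<times> 'r list \<times> 'w)) \<times> ('v + ('e \<times> 'r list \<times> 'w))" where
  "xends R vi vt e P ab [] = ab"
| "xends R vi vt e P ab (z # zs) =
     (let att = (\<lambda>x. if x = vi then fst ab else if x = vt then snd ab else Inr (e, P, x))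
      in xends R vi vt e (P @ [z]) (att (src R z), att (tgt R z)) zs)"

text \<open>Endpoints (initial, terminal) of the edge \<open>(e, zs)\<close> in any expansion containing it.\<close>
definition ends :: "('v, 'e) dgraph \<Rightarrow> ('w, 'r) dgraph \<Rightarrow> 'w \<Rightarrow> 'w \<Rightarrow> 'e \<times> 'r list \<Rightarrow>
      ('v + ('e \<times> 'r list \<times> 'w)) \<times> ('v + ('e \<times> 'r list \<times> 'w))" where
  "ends G R vi vt \<epsilon> = xends R vi vt (fst \<epsilon>) [] (Inl (src G (fst \<epsilon>)), Inl (tgt G (fst \<epsilon>))) (snd \<epsilon>)"

definition is_loopw :: "('v, 'e) dgraph \<Rightarrow> ('w, 'r) dgraph \<Rightarrow> 'w \<Rightarrow> 'w \<Rightarrow> 'e \<times> 'r list \<Rightarrow> bool" where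
  "is_loopw G R vi vt \<epsilon> \<longleftrightarrow> fst (ends G R vi vt \<epsilon>) = snd (ends G R vi vt \<epsilon>)"

definition words :: "('v, 'e) dgraph \<Rightarrow> ('w, 'r) dgraph \<Rightarrow> ('e \<times> 'r list) set" where
  "words G R = {(e, zs). e \<in> edges G \<and> set zs \<subseteq> edges R}"

definition Omega :: "('v, 'e) dgraph \<Rightarrow> ('w, 'r) dgraph \<Rightarrow> ('e \<times> (nat \<Rightarrow> 'r)) set" where
  "Omega G R = edges G \<times> (UNIV \<rightarrow> edges R)"

definition pre :: "nat \<Rightarrow> 'e \<times> (nat \<Rightarrow> 'r) \<Rightarrow> 'e \<times> 'r list" where
  "pre n \<omega> = (fst \<omega>, map (snd \<omega>) [0..<n])"

definition sharevert :: "('v, 'e) dgraph \<Rightarrow> ('w, 'r) dgraph \<Rightarrow> 'w \<Rightarrow> 'w \<Rightarrow> 'e \<times> 'r list \<Rightarrow> 'e \<times> 'r list \<Rightarrow> bool" where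
  "sharevert G R vi vt \<epsilon> \<epsilon>' \<longleftrightarrow>
     {fst (ends G R vi vt \<epsilon>), snd (ends G R vi vt \<epsilon>)} \<inter> {fst (ends G R vi vt \<epsilon>'), snd (ends G R vi vt \<epsilon>')} \<noteq> {}"

definition gsim :: "('v, 'e) dgraph \<Rightarrow> ('w, 'r) dgraph \<Rightarrow> 'w \<Rightarrow> 'w \<Rightarrow> 'e \<times> (nat \<Rightarrow> 'r) \<Rightarrow> 'e \<times> (nat \<Rightarrow> 'r) \<Rightarrow> bool" where
  "gsim G R vi vt \<omega> \<omega>' \<longleftrightarrow> (\<forall>n. sharevert G R vi vt (pre n \<omega>) (pre n \<omega>'))"

definition cls :: "('v, 'e) dgraph \<Rightarrow> ('w, 'r) dgraph \<Rightarrow> 'w \<Rightarrow> 'w \<Rightarrow> 'e \<times> (nat \<Rightarrow> 'r) \<Rightarrow> ('e \<times> (nat \<Rightarrow> 'r)) set" where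
  "cls G R vi vt \<omega> = {\<omega>' \<in> Omega G R. gsim G R vi vt \<omega> \<omega>'}"

text \<open>The limit space \<open>X(G) = \<Omega>_G / \<sim>\<close> (points are equivalence classes).\<close>
definition Xsp :: "('v, 'e) dgraph \<Rightarrow> ('w, 'r) dgraph \<Rightarrow> 'w \<Rightarrow> 'w \<Rightarrow> ('e \<times> (nat \<Rightarrow> 'r)) set set" where
  "Xsp G R vi vt = cls G R vi vt ` Omega G R"

definition Omega_top :: "('v, 'e) dgraph \<Rightarrow> ('w, 'r) dgraph \<Rightarrow> ('e \<times> (nat \<Rightarrow> 'r)) topology" where
  "Omega_top G R = prod_topology (discrete_topology (edges G))
                     (product_topology (\<lambda>_. discrete_topology (edges R)) UNIV)"

definition Xtop :: "('v, 'e) dgraph \<Rightarrow> ('w, 'r) dgraph \<Rightarrow> 'w \<Rightarrow> 'w \<Rightarrow> ('e \<times> (nat \<Rightarrow> 'r)) set topology" where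
  "Xtop G R vi vt = topology (\<lambda>U. U \<subseteq> Xsp G R vi vt \<and>
      openin (Omega_top G R) {\<omega> \<in> topspace (Omega_top G R). cls G R vi vt \<omega> \<in> U})"

definition has_prefix :: "'e \<times> 'r list \<Rightarrow> 'e \<times> (nat \<Rightarrow> 'r) \<Rightarrow> bool" where
  "has_prefix \<epsilon> \<omega> \<longleftrightarrow> pre (length (snd \<epsilon>)) \<omega> = \<epsilon>"

text \<open>\<open>\<epsilon> \<zeta>1 \<zeta>2 ... \<mapsto> \<epsilon>' \<zeta>1 \<zeta>2 ...\<close>\<close>
definition reprefix :: "'e \<times> 'r list \<Rightarrow> 'd \<times> 'r list \<Rightarrow> 'e \<times> (nat \<Rightarrow> 'r) \<Rightarrow> 'd \<times> (nat \<Rightarrow> 'r)" where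
  "reprefix \<epsilon> \<epsilon>' \<omega> = (fst \<epsilon>', \<lambda>n. if n < length (snd \<epsilon>') then snd \<epsilon>' ! n
                         else snd \<omega> (n - length (snd \<epsilon>') + length (snd \<epsilon>)))"

definition cell :: "('v, 'e) dgraph \<Rightarrow> ('w, 'r) dgraph \<Rightarrow> 'w \<Rightarrow> 'w \<Rightarrow> 'e \<times> 'r list \<Rightarrow> ('e \<times> (nat \<Rightarrow> 'r)) set set" where
  "cell G R vi vt \<epsilon> = cls G R vi vt ` {\<omega> \<in> Omega G R. has_prefix \<epsilon> \<omega>}"

text \<open>The point of \<open>X(G)\<close> which is the image of a vertex \<open>p\<close> of an expansion: limits of
  sequences whose prefixes are eventually all incident to \<open>p\<close>.\<close>
definition vpoint :: "('v, 'e) dgraph \<Rightarrow> ('w, 'r) dgraph \<Rightarrow> 'w \<Rightarrow> 'w \<Rightarrow> ('v + ('e \<times> 'r list \<times> 'w)) \<Rightarrow> ('e \<times> (nat \<Rightarrow> 'r)) set set" where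
  "vpoint G R vi vt p = cls G R vi vt ` {\<omega> \<in> Omega G R. \<exists>N. \<forall>n\<ge>N.
       p = fst (ends G R vi vt (pre n \<omega>)) \<or> p = snd (ends G R vi vt (pre n \<omega>))}"

definition cell_interior :: "('v, 'e) dgraph \<Rightarrow> ('w, 'r) dgraph \<Rightarrow> 'w \<Rightarrow> 'w \<Rightarrow> 'e \<times> 'r list \<Rightarrow> ('e \<times> (nat \<Rightarrow> 'r)) set set" where
  "cell_interior G R vi vt \<epsilon> = cell G R vi vt \<epsilon> -
      (vpoint G R vi vt (fst (ends G R vi vt \<epsilon>)) \<union> vpoint G R vi vt (snd (ends G R vi vt \<epsilon>)))"

text \<open>\<open>f\<close> restricts on \<open>C(\<epsilon>) \<subseteq> X(G)\<close> to the canonical homeomorphism onto \<open>C(\<epsilon>') \<subseteq> X(G')\<close>.\<close>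
definition canonical_on :: "('v, 'e) dgraph \<Rightarrow> ('u, 'd) dgraph \<Rightarrow> ('w, 'r) dgraph \<Rightarrow> 'w \<Rightarrow> 'w \<Rightarrow>
      'e \<times> 'r list \<Rightarrow> 'd \<times> 'r list \<Rightarrow> (('e \<times> (nat \<Rightarrow> 'r)) set \<Rightarrow> ('d \<times> (nat \<Rightarrow> 'r)) set) \<Rightarrow> bool" where
  "canonical_on G G' R vi vt \<epsilon> \<epsilon>' f \<longleftrightarrow>
     is_loopw G R vi vt \<epsilon> = is_loopw G' R vi vt \<epsilon>' \<and>
     (\<forall>\<omega>\<in>Omega G R. has_prefix \<epsilon> \<omega> \<longrightarrow> f (cls G R vi vt \<omega>) = cls G' R vi vt (reprefix \<epsilon> \<epsilon>' \<omega>))"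

definition rearrangement :: "('v, 'e) dgraph \<Rightarrow> ('u, 'd) dgraph \<Rightarrow> ('w, 'r) dgraph \<Rightarrow> 'w \<Rightarrow> 'w \<Rightarrow>
      (('e \<times> (nat \<Rightarrow> 'r)) set \<Rightarrow> ('d \<times> (nat \<Rightarrow> 'r)) set) \<Rightarrow> bool" where
  "rearrangement G G' R vi vt f \<longleftrightarrow>
     homeomorphic_map (Xtop G R vi vt) (Xtop G' R vi vt) f \<and>
     (\<exists>Cov. finite Cov \<and> Cov \<subseteq> words G R \<and>
        (\<Union>\<epsilon>\<in>Cov. cell G R vi vt \<epsilon>) = Xsp G R vi vt \<and>
        (\<forall>\<epsilon>1\<in>Cov. \<forall>\<epsilon>2\<in>Cov. \<epsilon>1 \<noteq> \<epsilon>2 \<longrightarrow>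
            cell_interior G R vi vt \<epsilon>1 \<inter> cell_interior G R vi vt \<epsilon>2 = {}) \<and>
        (\<forall>\<epsilon>\<in>Cov. \<exists>\<epsilon>'\<in>words G' R. canonical_on G G' R vi vt \<epsilon> \<epsilon>' f))"

definition rearr_group :: "('v, 'e) dgraph \<Rightarrow> ('w, 'r) dgraph \<Rightarrow> 'w \<Rightarrow> 'w \<Rightarrow>
      (('e \<times> (nat \<Rightarrow> 'r)) set \<Rightarrow> ('e \<times> (nat \<Rightarrow> 'r)) set) monoid" where
  "rearr_group G0 R vi vt = \<lparr> carrier = {f. rearrangement G0 G0 R vi vt f \<and> f \<in> extensional (Xsp G0 R vi vt)},
      mult = (\<lambda>f g. compose (Xsp G0 R vi vt) f g),
      one = restrict id (Xsp G0 R vi vt) \<rparr>"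

text \<open>Base isomorphism \<open>X(G1) \<rightarrow> X(G2)\<close> induced by a graph isomorphism with edge map \<open>\<phi>E\<close>:
  maps each \<open>C(\<epsilon>)\<close> canonically onto \<open>C(\<phi>E \<epsilon>)\<close>.\<close>
definition base_map :: "('v, 'e) dgraph \<Rightarrow> ('u, 'd) dgraph \<Rightarrow> ('w, 'r) dgraph \<Rightarrow> 'w \<Rightarrow> 'w \<Rightarrow> ('e \<Rightarrow> 'd) \<Rightarrow>
      ('e \<times> (nat \<Rightarrow> 'r)) set \<Rightarrow> ('d \<times> (nat \<Rightarrow> 'r)) set" where
  "base_map G1 G2 R vi vt \<phi>E x = (let \<omega> = (SOME \<omega>. \<omega> \<in> x) in cls G2 R vi vt (\<phi>E (fst \<omega>), snd \<omega>))"

definition range_equiv :: "('v, 'e) dgraph \<Rightarrow> ('w, 'r) dgraph \<Rightarrow> 'w \<Rightarrow> 'w \<Rightarrow>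
      ('u, 'd) dgraph \<Rightarrow> (('e \<times> (nat \<Rightarrow> 'r)) set \<Rightarrow> ('d \<times> (nat \<Rightarrow> 'r)) set) \<Rightarrow>
      ('t, 'c) dgraph \<Rightarrow> (('e \<times> (nat \<Rightarrow> 'r)) set \<Rightarrow> ('c \<times> (nat \<Rightarrow> 'r)) set) \<Rightarrow> bool" where
  "range_equiv G0 R vi vt G1 f1 G2 f2 \<longleftrightarrow>
     (\<exists>\<phi>V \<phi>E. graph_iso G1 G2 \<phi>V \<phi>E \<and>
        (\<forall>x\<in>Xsp G0 R vi vt. f2 x = base_map G1 G2 R vi vt \<phi>E (f1 x)))"

text \<open>Stabilizer in \<open>\<G>\<close> of the vertex \<open>[f]\<close> of \<open>K^1(\<G>)\<close>, where \<open>f : X(G0) \<rightarrow> X(G)\<close>,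
  under the action \<open>[f] \<cdot> g = [f \<circ> g]\<close>.\<close>
definition stabilizer :: "('v, 'e) dgraph \<Rightarrow> ('w, 'r) dgraph \<Rightarrow> 'w \<Rightarrow> 'w \<Rightarrow>
      ('u, 'd) dgraph \<Rightarrow> (('e \<times> (nat \<Rightarrow> 'r)) set \<Rightarrow> ('d \<times> (nat \<Rightarrow> 'r)) set) \<Rightarrow>
      (('e \<times> (nat \<Rightarrow> 'r)) set \<Rightarrow> ('e \<times> (nat \<Rightarrow> 'r)) set) set" where
  "stabilizer G0 R vi vt G f = {g \<in> carrier (rearr_group G0 R vi vt).
      range_equiv G0 R vi vt G (compose (Xsp G0 R vi vt) f g) G f}"

end

theory Submission
  imports Defs
begin

text \<open>An automorphism \<open>\<phi>\<close> of \<open>G\<close> induces a base automorphism \<open>b\<^sub>\<phi>\<close> of \<open>X(G)\<close>, and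
  \<open>\<phi> \<mapsto> f\<inverse> \<circ> b\<^sub>\<phi> \<circ> f\<close> is an isomorphism onto the stabilizer of \<open>[f]\<close>.
  The conjugate is a rearrangement because, on every cell of a deep enough full expansion
  of \<open>G0\<close>, it is a composite of canonical maps between cells. Surjectivity is the definition of
  range equivalence. Injectivity holds because below every cell there are cells all of whose
  points have their representatives inside it, so \<open>b\<^sub>\<phi>\<close> determines the edge map of \<open>\<phi>\<close>,
  which determines \<open>\<phi>\<close> when \<open>G\<close> has no isolated vertices.\<close>

section \<open>Endpoints of edges of expansions\<close>

definition child_ends :: "('w, 'r) dgraph \<Rightarrow> 'w \<Rightarrow> 'w \<Rightarrow> 'e \<Rightarrow> 'r list \<Rightarrow>
      ('v + ('e \<times> 'r list \<times> 'w)) \<times> ('v + ('e \<times> 'r list \<times> 'w)) \<Rightarrow> 'r \<Rightarrow>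
      ('v + ('e \<times> 'r list \<times> 'w)) \<times> ('v + ('e \<times> 'r list \<times> 'w))" where
  "child_ends R vi vt e P ab z =
     (let att = (\<lambda>x. if x = vi then fst ab else if x = vt then snd ab else Inr (e, P, x))
      in (att (src R z), att (tgt R z)))"

lemma xends_snoc:
  "xends R vi vt e P ab (zs @ [z]) = child_ends R vi vt e (P @ zs) (xends R vi vt e P ab zs) z"
  by (induction zs arbitrary: P ab) (simp_all add: child_ends_def Let_def)

lemma ends_Nil: "ends G R vi vt (e, []) = (Inl (src G e), Inl (tgt G e))"
  by (simp add: ends_def)

lemma ends_snoc: "ends G R vi vt (e, P @ [z]) = child_ends R vi vt e P (ends G R vi vt (e, P)) z"
  by (simp add: ends_def xends_snoc)

definition endpoints :: "('v, 'e) dgraph \<Rightarrow> ('w, 'r) dgraph \<Rightarrow> 'w \<Rightarrow> 'w \<Rightarrow> 'e \<times> 'r list \<Rightarrow>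
      ('v + ('e \<times> 'r list \<times> 'w)) set" where
  "endpoints G R vi vt \<epsilon> = {fst (ends G R vi vt \<epsilon>), snd (ends G R vi vt \<epsilon>)}"

definition fresh_vertices :: "'e \<Rightarrow> 'r list \<Rightarrow> ('v + ('e \<times> 'r list \<times> 'w)) set" where
  "fresh_vertices e P = range (\<lambda>x. Inr (e, P, x))"

lemma sharevert_iff_endpoints:
  "sharevert G R vi vt \<epsilon> \<epsilon>' \<longleftrightarrow> endpoints G R vi vt \<epsilon> \<inter> endpoints G R vi vt \<epsilon>' \<noteq> {}"
  by (simp add: sharevert_def endpoints_def)

lemma endpoints_snoc_subset:
  "endpoints G R vi vt (e, P @ [z]) \<subseteq> endpoints G R vi vt (e, P) \<union> fresh_vertices e P"
  by (auto simp: endpoints_def fresh_vertices_def ends_snoc child_ends_def Let_def)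

lemma endpoints_subset:
  "endpoints G R vi vt (e, P) \<subseteq> {Inl (src G e), Inl (tgt G e)} \<union>
      {Inr (e, Q, x) | Q x. length Q < length P \<and> take (length Q) P = Q}"
proof (induction P rule: rev_induct)
  case Nil
  then show ?case by (auto simp: endpoints_def ends_Nil)
next
  case (snoc z P)
  show ?case
  proof
    fix c assume "c \<in> endpoints G R vi vt (e, P @ [z])"
    then have "c \<in> endpoints G R vi vt (e, P) \<or> (\<exists>x. c = Inr (e, P, x))"
      using endpoints_snoc_subset[of G R vi vt e P z] by (auto simp: fresh_vertices_def)
    then show "c \<in> {Inl (src G e), Inl (tgt G e)} \<union>
        {Inr (e, Q, x) | Q x. length Q < length (P @ [z]) \<and> take (length Q) (P @ [z]) = Q}"
      using snoc by auto
  qed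
qed

lemma endpointsE:
  assumes "c \<in> endpoints G R vi vt (e, P)"
  obtains "c = Inl (src G e)" | "c = Inl (tgt G e)"
    | Q x where "c = Inr (e, Q, x)" "length Q < length P" "take (length Q) P = Q"
  using endpoints_subset[of G R vi vt e P] assms by blast

lemma fresh_not_endpoint:
  "length P' \<le> length P \<Longrightarrow> Inr (e, P, x) \<notin> endpoints G R vi vt (e', P')"
  by (auto elim: endpointsE)

lemma fresh_vertices_disjoint:
  "length P' \<le> length P \<Longrightarrow> endpoints G R vi vt (e', P') \<inter> fresh_vertices e P = {}"
  by (auto simp: fresh_vertices_def dest: fresh_not_endpoint)

definition terminals_nonadjacent :: "('w, 'r) dgraph \<Rightarrow> 'w \<Rightarrow> 'w \<Rightarrow> bool" where
  "terminals_nonadjacent R vi vt \<longleftrightarrow> vi \<noteq> vt \<and>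
     (\<forall>z\<in>edges R. \<not> (src R z = vi \<and> tgt R z = vt) \<and> \<not> (src R z = vt \<and> tgt R z = vi))"

text \<open>Both endpoints of a parent edge are attached only to \<open>vi\<close> and \<open>vt\<close>, which no edge
  of \<open>R\<close> joins; so a child edge contains at most one of them.\<close>
lemma child_meets_parent_once:
  assumes "terminals_nonadjacent R vi vt" "z \<in> edges R"
    and "u \<in> endpoints G R vi vt (e, P @ [z]) \<inter> endpoints G R vi vt (e, P)"
    and "w \<in> endpoints G R vi vt (e, P @ [z]) \<inter> endpoints G R vi vt (e, P)"
  shows "u = w"
proof (rule ccontr)
  assume "u \<noteq> w"
  define ab where "ab = ends G R vi vt (e, P)"
  define att where "att x = (if x = vi then fst ab else if x = vt then snd ab else Inr (e, P, x))" for x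
  have old: "x = vi \<or> x = vt" if "att x \<in> {fst ab, snd ab}" for x
    using that fresh_not_endpoint[of P P e x G R vi vt e]
    by (auto simp: att_def ab_def endpoints_def split: if_splits)
  have child: "endpoints G R vi vt (e, P @ [z]) = {att (src R z), att (tgt R z)}"
    by (simp add: endpoints_def ends_snoc child_ends_def Let_def att_def ab_def)
  have parent: "endpoints G R vi vt (e, P) = {fst ab, snd ab}"
    by (simp add: endpoints_def ab_def)
  have "{att (src R z), att (tgt R z)} \<subseteq> {fst ab, snd ab}" "src R z \<noteq> tgt R z"
    using assms(3,4) \<open>u \<noteq> w\<close> unfolding child parent by auto
  then show False
    using old assms(1,2) unfolding terminals_nonadjacent_def by auto
qed

lemma is_loopw_snoc:
  assumes "terminals_nonadjacent R vi vt" "z \<in> edges R"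
  shows "is_loopw G R vi vt (e, P @ [z]) \<longleftrightarrow> src R z = tgt R z"
proof -
  define ab where "ab = ends G R vi vt (e, P)"
  have fresh: "Inr (e, P, x) \<noteq> fst ab" "Inr (e, P, x) \<noteq> snd ab" for x
    using fresh_not_endpoint[of P P e x G R vi vt e] unfolding ab_def endpoints_def by auto
  have R: "\<not> (src R z = vi \<and> tgt R z = vt)" "\<not> (src R z = vt \<and> tgt R z = vi)" "vi \<noteq> vt"
    using assms unfolding terminals_nonadjacent_def by auto
  show ?thesis
    unfolding is_loopw_def ends_snoc ab_def[symmetric] child_ends_def Let_def fst_conv snd_conv
    using R fresh[of "src R z"] fresh[of "tgt R z"] fresh[of "src R z", symmetric] fresh[of "tgt R z", symmetric]
    by (cases "src R z = vi"; cases "src R z = vt"; cases "tgt R z = vi"; cases "tgt R z = vt"; simp)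
qed

lemma common_child_vertex:
  fixes G :: "('v, 'e) dgraph" and R :: "('w, 'r) dgraph"
  assumes "length P' = length P" "(e, P) \<noteq> (e', P')"
    and "u \<in> endpoints G R vi vt (e, P @ [z]) \<inter> endpoints G R vi vt (e', P' @ [z'])"
  shows "u \<in> endpoints G R vi vt (e, P) \<inter> endpoints G R vi vt (e', P')"
proof -
  have "fresh_vertices e P \<inter> fresh_vertices e' P' = ({} :: ('v + ('e \<times> 'r list \<times> 'w)) set)"
    using assms(2) by (auto simp: fresh_vertices_def)
  moreover have "endpoints G R vi vt (e, P) \<inter> fresh_vertices e' P' = {}"
    "endpoints G R vi vt (e', P') \<inter> fresh_vertices e P = {}"
    by (simp_all add: fresh_vertices_disjoint assms(1))
  moreover have "u \<in> endpoints G R vi vt (e, P) \<union> fresh_vertices e P"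
    "u \<in> endpoints G R vi vt (e', P') \<union> fresh_vertices e' P'"
    using assms(3) endpoints_snoc_subset[of G R vi vt e P z] endpoints_snoc_subset[of G R vi vt e' P' z']
    by auto
  ultimately show ?thesis by auto
qed

lemma sharevert_parents:
  fixes G :: "('v, 'e) dgraph" and R :: "('w, 'r) dgraph"
  assumes "terminals_nonadjacent R vi vt" "z' \<in> edges R"
    and "length P' = length P" "length P'' = length P"
    and "sharevert G R vi vt (e, P @ [z]) (e', P' @ [z'])"
    and "sharevert G R vi vt (e', P' @ [z']) (e'', P'' @ [z''])"
  shows "sharevert G R vi vt (e, P) (e'', P'')"
proof -
  let ?E = "endpoints G R vi vt"
  obtain u where u: "u \<in> ?E (e, P @ [z]) \<inter> ?E (e', P' @ [z'])"
    using assms(5) by (auto simp: sharevert_iff_endpoints)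
  obtain w where w: "w \<in> ?E (e', P' @ [z']) \<inter> ?E (e'', P'' @ [z''])"
    using assms(6) by (auto simp: sharevert_iff_endpoints)
  have nonempty: "?E \<epsilon> \<noteq> {}" for \<epsilon> by (simp add: endpoints_def)
  consider "(e, P) = (e', P')" | "(e'', P'') = (e', P')" | "(e, P) \<noteq> (e', P')" "(e'', P'') \<noteq> (e', P')"
    by blast
  then show ?thesis
  proof cases
    case 1
    show ?thesis
    proof (cases "(e, P) = (e'', P'')")
      case False
      have "w \<in> ?E (e, P @ [z']) \<inter> ?E (e'', P'' @ [z''])" using w 1 by simp
      then have "w \<in> ?E (e, P) \<inter> ?E (e'', P'')"
        by (rule common_child_vertex[OF assms(4) False])
      then show ?thesis by (auto simp: sharevert_iff_endpoints)
    qed (simp add: sharevert_iff_endpoints nonempty)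
  next
    case 2
    show ?thesis
    proof (cases "(e, P) = (e'', P'')")
      case False
      have "u \<in> ?E (e, P @ [z]) \<inter> ?E (e'', P'' @ [z'])" using u 2 by simp
      then have "u \<in> ?E (e, P) \<inter> ?E (e'', P'')"
        by (rule common_child_vertex[OF assms(4) False])
      then show ?thesis by (auto simp: sharevert_iff_endpoints)
    qed (simp add: sharevert_iff_endpoints nonempty)
  next
    case 3
    have u': "u \<in> ?E (e, P) \<inter> ?E (e', P')"
      by (rule common_child_vertex[OF assms(3) 3(1) u])
    have "w \<in> ?E (e'', P'' @ [z'']) \<inter> ?E (e', P' @ [z'])" using w by blast
    then have "w \<in> ?E (e'', P'') \<inter> ?E (e', P')"
      using common_child_vertex[OF _ 3(2)] assms(3,4) by simp
    then have w': "w \<in> ?E (e', P') \<inter> ?E (e'', P'')" by blast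
    have "u = w"
      by (rule child_meets_parent_once[OF assms(1,2)]) (use u u' w w' in blast)+
    then show ?thesis using u' w' by (auto simp: sharevert_iff_endpoints)
  qed
qed

section \<open>The equivalence relation and the limit space\<close>

lemma Omega_iff: "\<omega> \<in> Omega G R \<longleftrightarrow> fst \<omega> \<in> edges G \<and> (\<forall>n. snd \<omega> n \<in> edges R)"
  by (cases \<omega>) (auto simp: Omega_def Pi_def)

lemma pre_Suc: "pre (Suc n) \<omega> = (fst \<omega>, snd (pre n \<omega>) @ [snd \<omega> n])"
  by (simp add: pre_def)

lemma length_pre [simp]: "length (snd (pre n \<omega>)) = n"
  by (simp add: pre_def)

lemma fst_pre [simp]: "fst (pre n \<omega>) = fst \<omega>"
  by (simp add: pre_def)

lemma gsim_refl: "gsim G R vi vt \<omega> \<omega>"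
  by (simp add: gsim_def sharevert_iff_endpoints endpoints_def)

lemma gsim_sym: "gsim G R vi vt \<omega> \<omega>' \<Longrightarrow> gsim G R vi vt \<omega>' \<omega>"
  unfolding gsim_def sharevert_def by (simp add: Int_commute)

lemma gsim_trans:
  assumes ok: "terminals_nonadjacent R vi vt" and om: "\<omega>' \<in> Omega G R"
    and a: "gsim G R vi vt \<omega> \<omega>'" and b: "gsim G R vi vt \<omega>' \<omega>''"
  shows "gsim G R vi vt \<omega> \<omega>''"
  unfolding gsim_def
proof
  fix n
  have s1: "sharevert G R vi vt (pre (Suc n) \<omega>) (pre (Suc n) \<omega>')"
    and s2: "sharevert G R vi vt (pre (Suc n) \<omega>') (pre (Suc n) \<omega>'')"
    using a b by (auto simp: gsim_def)
  have z: "snd \<omega>' n \<in> edges R" using om by (simp add: Omega_iff)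
  have "sharevert G R vi vt (fst \<omega>, snd (pre n \<omega>)) (fst \<omega>'', snd (pre n \<omega>''))"
    by (rule sharevert_parents[OF ok z _ _ s1[unfolded pre_Suc] s2[unfolded pre_Suc]]) simp_all
  then show "sharevert G R vi vt (pre n \<omega>) (pre n \<omega>'')"
    by (simp add: pre_def)
qed

lemma in_cls: "\<omega> \<in> Omega G R \<Longrightarrow> \<omega> \<in> cls G R vi vt \<omega>"
  by (simp add: cls_def gsim_refl)

lemma cls_eq_iff:
  assumes ok: "terminals_nonadjacent R vi vt" and "\<omega>1 \<in> Omega G R" "\<omega>2 \<in> Omega G R"
  shows "cls G R vi vt \<omega>1 = cls G R vi vt \<omega>2 \<longleftrightarrow> gsim G R vi vt \<omega>1 \<omega>2"
proof
  assume "cls G R vi vt \<omega>1 = cls G R vi vt \<omega>2"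
  then have "\<omega>2 \<in> cls G R vi vt \<omega>1" using in_cls[OF assms(3)] by simp
  then show "gsim G R vi vt \<omega>1 \<omega>2" by (simp add: cls_def)
next
  assume g: "gsim G R vi vt \<omega>1 \<omega>2"
  show "cls G R vi vt \<omega>1 = cls G R vi vt \<omega>2"
  proof (rule subset_antisym; rule subsetI)
    fix x assume "x \<in> cls G R vi vt \<omega>1"
    then show "x \<in> cls G R vi vt \<omega>2"
      unfolding cls_def using gsim_sym[OF g] gsim_trans[OF ok assms(2), of \<omega>2 x] by auto
  next
    fix x assume "x \<in> cls G R vi vt \<omega>2"
    then show "x \<in> cls G R vi vt \<omega>1"
      unfolding cls_def using g gsim_trans[OF ok assms(3)] by auto
  qed
qed

lemma cls_in_Xsp: "\<omega> \<in> Omega G R \<Longrightarrow> cls G R vi vt \<omega> \<in> Xsp G R vi vt"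
  by (simp add: Xsp_def)

lemma topspace_Omega_top: "topspace (Omega_top G R) = Omega G R"
  by (simp add: Omega_top_def Omega_def PiE_UNIV_domain)

lemma istopology_quotient: "istopology (\<lambda>U. U \<subseteq> A \<and> openin X {x \<in> topspace X. q x \<in> U})"
proof -
  have "{x \<in> topspace X. q x \<in> S \<inter> T} = {x \<in> topspace X. q x \<in> S} \<inter> {x \<in> topspace X. q x \<in> T}"
    "{x \<in> topspace X. q x \<in> \<Union>K} = (\<Union>S\<in>K. {x \<in> topspace X. q x \<in> S})" for S T K
    by auto
  then show ?thesis unfolding istopology_def by auto
qed

lemma openin_Xtop:
  "openin (Xtop G R vi vt) U \<longleftrightarrow> U \<subseteq> Xsp G R vi vt \<and>
      openin (Omega_top G R) {\<omega> \<in> Omega G R. cls G R vi vt \<omega> \<in> U}"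
proof -
  have "openin (Xtop G R vi vt) = (\<lambda>U. U \<subseteq> Xsp G R vi vt \<and>
      openin (Omega_top G R) {\<omega> \<in> topspace (Omega_top G R). cls G R vi vt \<omega> \<in> U})"
    unfolding Xtop_def by (rule topology_inverse'[OF istopology_quotient])
  then show ?thesis by (simp add: topspace_Omega_top)
qed

lemma topspace_Xtop: "topspace (Xtop G R vi vt) = Xsp G R vi vt"
proof -
  have "{\<omega> \<in> Omega G R. cls G R vi vt \<omega> \<in> Xsp G R vi vt} = topspace (Omega_top G R)"
    by (auto simp: topspace_Omega_top cls_in_Xsp)
  then have "openin (Xtop G R vi vt) (Xsp G R vi vt)"
    unfolding openin_Xtop by simp
  then show ?thesis
    using openin_subset openin_Xtop[of G R vi vt "topspace (Xtop G R vi vt)"] by blast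
qed

section \<open>Base isomorphisms\<close>

lemma graph_iso_edge:
  assumes "graph_iso G1 G2 \<phi>V \<phi>E" "e \<in> edges G1"
  shows "\<phi>E e \<in> edges G2" "src G2 (\<phi>E e) = \<phi>V (src G1 e)" "tgt G2 (\<phi>E e) = \<phi>V (tgt G1 e)"
  using assms by (auto simp: graph_iso_def bij_betw_def)

lemma graph_iso_cong:
  assumes "graph_iso G H \<phi>V \<phi>E" "fin_graph G"
    and "\<And>v. v \<in> verts G \<Longrightarrow> \<phi>V' v = \<phi>V v" "\<And>e. e \<in> edges G \<Longrightarrow> \<phi>E' e = \<phi>E e"
  shows "graph_iso G H \<phi>V' \<phi>E'"
  using assms bij_betw_cong[of "verts G" \<phi>V' \<phi>V] bij_betw_cong[of "edges G" \<phi>E' \<phi>E]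
  by (auto simp: graph_iso_def fin_graph_def)

lemma graph_iso_comp:
  assumes "graph_iso G1 G2 \<phi>V \<phi>E" "graph_iso G2 G3 \<psi>V \<psi>E" "fin_graph G1"
  shows "graph_iso G1 G3 (\<psi>V \<circ> \<phi>V) (\<psi>E \<circ> \<phi>E)"
proof -
  have "src G3 (\<psi>E (\<phi>E e)) = \<psi>V (\<phi>V (src G1 e)) \<and> tgt G3 (\<psi>E (\<phi>E e)) = \<psi>V (\<phi>V (tgt G1 e))"
    if "e \<in> edges G1" for e
    using graph_iso_edge[OF assms(1) that] graph_iso_edge[OF assms(2) graph_iso_edge(1)[OF assms(1) that]]
    by simp
  then show ?thesis
    using assms(1,2) bij_betw_trans[of \<phi>V "verts G1" "verts G2" \<psi>V "verts G3"]
      bij_betw_trans[of \<phi>E "edges G1" "edges G2" \<psi>E "edges G3"]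
    by (simp add: graph_iso_def)
qed

lemma graph_iso_id: "fin_graph G \<Longrightarrow> graph_iso G G id id"
  by (simp add: graph_iso_def fin_graph_def)

lemma graph_iso_inv:
  assumes "graph_iso G1 G2 \<phi>V \<phi>E" "fin_graph G1"
  shows "graph_iso G2 G1 (inv_into (verts G1) \<phi>V) (inv_into (edges G1) \<phi>E)"
proof -
  have bv: "bij_betw \<phi>V (verts G1) (verts G2)" and be: "bij_betw \<phi>E (edges G1) (edges G2)"
    using assms(1) by (auto simp: graph_iso_def)
  have "src G1 (inv_into (edges G1) \<phi>E e') = inv_into (verts G1) \<phi>V (src G2 e') \<and>
        tgt G1 (inv_into (edges G1) \<phi>E e') = inv_into (verts G1) \<phi>V (tgt G2 e')" if "e' \<in> edges G2" for e'
  proof -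
    define e where "e = inv_into (edges G1) \<phi>E e'"
    have e: "e \<in> edges G1" "\<phi>E e = e'"
      using that be unfolding e_def by (auto simp: bij_betw_def inv_into_into f_inv_into_f)
    have "src G1 e \<in> verts G1" "tgt G1 e \<in> verts G1" using assms(2) e by (auto simp: fin_graph_def)
    then show ?thesis using graph_iso_edge[OF assms(1) e(1)] e bv
      by (auto simp: bij_betw_def e_def[symmetric])
  qed
  then show ?thesis using bij_betw_inv_into[OF bv] bij_betw_inv_into[OF be]
    by (simp add: graph_iso_def)
qed

lemma fin_graph_iso:
  assumes iso: "graph_iso G1 G2 \<phi>V \<phi>E" and fg: "fin_graph G1"
  shows "fin_graph G2"
proof -
  have bv: "bij_betw \<phi>V (verts G1) (verts G2)" and be: "bij_betw \<phi>E (edges G1) (edges G2)"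
    using iso by (auto simp: graph_iso_def)
  have "finite (verts G2)" "finite (edges G2)" using fg bij_betw_finite[OF bv] bij_betw_finite[OF be]
    by (auto simp: fin_graph_def)
  moreover have "src G2 e' \<in> verts G2 \<and> tgt G2 e' \<in> verts G2" if "e' \<in> edges G2" for e'
  proof -
    have "e' \<in> \<phi>E ` edges G1" using that be by (simp add: bij_betw_def)
    then obtain e where "e \<in> edges G1" "e' = \<phi>E e" by blast
    then show ?thesis using graph_iso_edge[OF iso] fg bv by (auto simp: fin_graph_def bij_betw_def)
  qed
  ultimately show ?thesis by (simp add: fin_graph_def)
qed

definition lift_vertex :: "('v \<Rightarrow> 'u) \<Rightarrow> ('e \<Rightarrow> 'd) \<Rightarrow> 'v + ('e \<times> 'r list \<times> 'w) \<Rightarrow> 'u + ('d \<times> 'r list \<times> 'w)" where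
  "lift_vertex \<phi>V \<phi>E c = (case c of Inl v \<Rightarrow> Inl (\<phi>V v) | Inr (e, Q, x) \<Rightarrow> Inr (\<phi>E e, Q, x))"

lemma lift_vertex_simps [simp]:
  "lift_vertex \<phi>V \<phi>E (Inl v) = Inl (\<phi>V v)" "lift_vertex \<phi>V \<phi>E (Inr (e, Q, x)) = Inr (\<phi>E e, Q, x)"
  by (simp_all add: lift_vertex_def)

lemma ends_graph_iso:
  assumes "graph_iso G1 G2 \<phi>V \<phi>E" "e \<in> edges G1"
  shows "ends G2 R vi vt (\<phi>E e, P) = map_prod (lift_vertex \<phi>V \<phi>E) (lift_vertex \<phi>V \<phi>E) (ends G1 R vi vt (e, P))"
proof (induction P rule: rev_induct)
  case Nil
  then show ?case using graph_iso_edge[OF assms] by (simp add: ends_Nil)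
next
  case (snoc z P)
  then show ?case
    by (cases "ends G1 R vi vt (e, P)") (simp add: ends_snoc child_ends_def Let_def)
qed

definition expansion_vertices :: "('v, 'e) dgraph \<Rightarrow> ('v + ('e \<times> 'r list \<times> 'w)) set" where
  "expansion_vertices G = Inl ` verts G \<union> {Inr (e, Q, x) | e Q x. e \<in> edges G}"

lemma inj_on_lift_vertex:
  assumes "graph_iso G1 G2 \<phi>V \<phi>E"
  shows "inj_on (lift_vertex \<phi>V \<phi>E :: _ \<Rightarrow> 'u + ('d \<times> 'r list \<times> 'w))
           (expansion_vertices G1 :: ('v + ('e \<times> 'r list \<times> 'w)) set)"
proof -
  have "inj_on \<phi>V (verts G1)" "inj_on \<phi>E (edges G1)"
    using assms unfolding graph_iso_def bij_betw_def by auto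
  then show ?thesis
    unfolding expansion_vertices_def by (auto intro!: inj_onI dest: inj_onD)
qed

lemma endpoints_subset_expansion_vertices:
  assumes "fin_graph G" "e \<in> edges G"
  shows "endpoints G R vi vt (e, P) \<subseteq> expansion_vertices G"
  using assms endpoints_subset[of G R vi vt e P] unfolding fin_graph_def expansion_vertices_def by blast

lemma endpoints_graph_iso:
  assumes "graph_iso G1 G2 \<phi>V \<phi>E" "e \<in> edges G1"
  shows "endpoints G2 R vi vt (\<phi>E e, P) = lift_vertex \<phi>V \<phi>E ` endpoints G1 R vi vt (e, P)"
  by (simp add: endpoints_def ends_graph_iso[OF assms])

lemma sharevert_graph_iso:
  fixes G1 :: "('v, 'e) dgraph" and G2 :: "('u, 'd) dgraph" and R :: "('w, 'r) dgraph"
  assumes "graph_iso G1 G2 \<phi>V \<phi>E" "fin_graph G1" "e \<in> edges G1" "e' \<in> edges G1"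
  shows "sharevert G2 R vi vt (\<phi>E e, P) (\<phi>E e', P') \<longleftrightarrow> sharevert G1 R vi vt (e, P) (e', P')"
proof -
  have "lift_vertex \<phi>V \<phi>E ` (endpoints G1 R vi vt (e, P) \<inter> endpoints G1 R vi vt (e', P')) =
      lift_vertex \<phi>V \<phi>E ` endpoints G1 R vi vt (e, P) \<inter> lift_vertex \<phi>V \<phi>E ` endpoints G1 R vi vt (e', P')"
    by (rule inj_on_image_Int[OF inj_on_lift_vertex[OF assms(1)]
      endpoints_subset_expansion_vertices[OF assms(2,3)] endpoints_subset_expansion_vertices[OF assms(2,4)]])
  then show ?thesis
    unfolding sharevert_iff_endpoints endpoints_graph_iso[OF assms(1,3)] endpoints_graph_iso[OF assms(1,4)]
    by (metis image_is_empty)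
qed

lemma is_loopw_graph_iso:
  fixes G1 :: "('v, 'e) dgraph" and G2 :: "('u, 'd) dgraph" and R :: "('w, 'r) dgraph"
  assumes "graph_iso G1 G2 \<phi>V \<phi>E" "fin_graph G1" "e \<in> edges G1"
  shows "is_loopw G2 R vi vt (\<phi>E e, P) \<longleftrightarrow> is_loopw G1 R vi vt (e, P)"
proof -
  have "fst (ends G1 R vi vt (e, P)) \<in> expansion_vertices G1" "snd (ends G1 R vi vt (e, P)) \<in> expansion_vertices G1"
    using endpoints_subset_expansion_vertices[OF assms(2,3), of R vi vt P] by (auto simp: endpoints_def)
  then show ?thesis
    unfolding is_loopw_def ends_graph_iso[OF assms(1,3)] using inj_on_lift_vertex[OF assms(1)]
    by (cases "ends G1 R vi vt (e, P)") (auto simp: inj_on_def)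
qed

definition relabel :: "('e \<Rightarrow> 'd) \<Rightarrow> 'e \<times> (nat \<Rightarrow> 'r) \<Rightarrow> 'd \<times> (nat \<Rightarrow> 'r)" where
  "relabel \<phi>E \<omega> = (\<phi>E (fst \<omega>), snd \<omega>)"

lemma relabel_Omega:
  "graph_iso G1 G2 \<phi>V \<phi>E \<Longrightarrow> \<omega> \<in> Omega G1 R \<Longrightarrow> relabel \<phi>E \<omega> \<in> Omega G2 R"
  by (simp add: Omega_iff relabel_def graph_iso_edge(1))

lemma gsim_graph_iso:
  assumes "graph_iso G1 G2 \<phi>V \<phi>E" "fin_graph G1" "\<omega> \<in> Omega G1 R" "\<omega>' \<in> Omega G1 R"
  shows "gsim G2 R vi vt (relabel \<phi>E \<omega>) (relabel \<phi>E \<omega>') \<longleftrightarrow> gsim G1 R vi vt \<omega> \<omega>'"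
proof -
  have "fst \<omega> \<in> edges G1" "fst \<omega>' \<in> edges G1" using assms(3,4) by (auto simp: Omega_iff)
  then show ?thesis
    unfolding gsim_def by (simp add: pre_def relabel_def sharevert_graph_iso[OF assms(1,2)])
qed

lemma base_map_cls:
  assumes "terminals_nonadjacent R vi vt" "graph_iso G1 G2 \<phi>V \<phi>E" "fin_graph G1" "\<omega> \<in> Omega G1 R"
  shows "base_map G1 G2 R vi vt \<phi>E (cls G1 R vi vt \<omega>) = cls G2 R vi vt (relabel \<phi>E \<omega>)"
proof -
  define \<omega>0 where "\<omega>0 = (SOME \<omega>0. \<omega>0 \<in> cls G1 R vi vt \<omega>)"
  have "\<omega>0 \<in> cls G1 R vi vt \<omega>" unfolding \<omega>0_def using in_cls[OF assms(4)] by (rule someI)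
  then have "gsim G1 R vi vt \<omega>0 \<omega>" "\<omega>0 \<in> Omega G1 R" by (auto simp: cls_def gsim_sym)
  then have "cls G2 R vi vt (relabel \<phi>E \<omega>0) = cls G2 R vi vt (relabel \<phi>E \<omega>)"
    using cls_eq_iff[OF assms(1) relabel_Omega[OF assms(2)] relabel_Omega[OF assms(2,4)]]
      gsim_graph_iso[OF assms(2,3) _ assms(4)] by simp
  then show ?thesis unfolding base_map_def Let_def \<omega>0_def[symmetric] by (simp add: relabel_def)
qed

lemma base_map_in_Xsp:
  assumes "terminals_nonadjacent R vi vt" "graph_iso G1 G2 \<phi>V \<phi>E" "fin_graph G1" "x \<in> Xsp G1 R vi vt"
  shows "base_map G1 G2 R vi vt \<phi>E x \<in> Xsp G2 R vi vt"
proof -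
  obtain \<omega> where "\<omega> \<in> Omega G1 R" "x = cls G1 R vi vt \<omega>" using assms(4) unfolding Xsp_def by blast
  then show ?thesis
    using base_map_cls[OF assms(1-3)] relabel_Omega[OF assms(2)] cls_in_Xsp by metis
qed

lemma base_map_cong:
  assumes "x \<in> Xsp G1 R vi vt" "\<And>e. e \<in> edges G1 \<Longrightarrow> \<phi>E e = \<phi>E' e"
  shows "base_map G1 G2 R vi vt \<phi>E x = base_map G1 G2 R vi vt \<phi>E' x"
proof -
  obtain \<omega> where "\<omega> \<in> Omega G1 R" "x = cls G1 R vi vt \<omega>" using assms(1) unfolding Xsp_def by blast
  then have "(SOME \<omega>. \<omega> \<in> x) \<in> x" using in_cls by (metis someI)
  then have "fst (SOME \<omega>. \<omega> \<in> x) \<in> edges G1" using \<open>x = cls G1 R vi vt \<omega>\<close> by (auto simp: cls_def Omega_iff)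
  then show ?thesis unfolding base_map_def Let_def using assms(2) by simp
qed

lemma base_map_comp:
  assumes "terminals_nonadjacent R vi vt" "graph_iso G1 G2 \<phi>V \<phi>E" "graph_iso G2 G3 \<psi>V \<psi>E"
    and "fin_graph G1" "fin_graph G2" "x \<in> Xsp G1 R vi vt"
  shows "base_map G1 G3 R vi vt (\<psi>E \<circ> \<phi>E) x = base_map G2 G3 R vi vt \<psi>E (base_map G1 G2 R vi vt \<phi>E x)"
proof -
  obtain \<omega> where \<omega>: "\<omega> \<in> Omega G1 R" "x = cls G1 R vi vt \<omega>" using assms(6) unfolding Xsp_def by blast
  have "relabel (\<psi>E \<circ> \<phi>E) \<omega> = relabel \<psi>E (relabel \<phi>E \<omega>)" by (simp add: relabel_def)
  then show ?thesis
    unfolding \<omega>(2) base_map_cls[OF assms(1) graph_iso_comp[OF assms(2,3,4)] assms(4) \<omega>(1)]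
      base_map_cls[OF assms(1,2,4) \<omega>(1)] base_map_cls[OF assms(1,3,5) relabel_Omega[OF assms(2) \<omega>(1)]]
    by simp
qed

lemma base_map_inv:
  assumes "terminals_nonadjacent R vi vt" "graph_iso G1 G2 \<phi>V \<phi>E" "fin_graph G1" "x \<in> Xsp G1 R vi vt"
  shows "base_map G2 G1 R vi vt (inv_into (edges G1) \<phi>E) (base_map G1 G2 R vi vt \<phi>E x) = x"
proof -
  have inv: "graph_iso G2 G1 (inv_into (verts G1) \<phi>V) (inv_into (edges G1) \<phi>E)"
    by (rule graph_iso_inv[OF assms(2,3)])
  have "base_map G1 G1 R vi vt (inv_into (edges G1) \<phi>E \<circ> \<phi>E) x = base_map G1 G1 R vi vt id x"
    using assms(2,4) by (intro base_map_cong) (auto simp: graph_iso_def bij_betw_def)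
  also have "\<dots> = x"
  proof -
    obtain \<omega> where "\<omega> \<in> Omega G1 R" "x = cls G1 R vi vt \<omega>" using assms(4) unfolding Xsp_def by blast
    then show ?thesis
      using base_map_cls[OF assms(1) graph_iso_id[OF assms(3)] assms(3)] by (simp add: relabel_def)
  qed
  finally show ?thesis
    using base_map_comp[OF assms(1,2) inv assms(3) fin_graph_iso[OF assms(2,3)] assms(4)] by simp
qed

lemma continuous_map_relabel:
  assumes "graph_iso G1 G2 \<phi>V \<phi>E"
  shows "continuous_map (Omega_top G1 R) (Omega_top G2 R) (relabel \<phi>E)"
proof -
  have "continuous_map (discrete_topology (edges G1)) (discrete_topology (edges G2)) \<phi>E"
    using graph_iso_edge(1)[OF assms] by auto
  then have "continuous_map (Omega_top G1 R) (discrete_topology (edges G2)) (\<phi>E \<circ> fst)"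
    unfolding Omega_top_def by (rule continuous_map_compose[OF continuous_map_fst])
  moreover have "fst \<circ> relabel \<phi>E = \<phi>E \<circ> fst" "snd \<circ> relabel \<phi>E = snd"
    by (auto simp: relabel_def)
  ultimately show ?thesis
    unfolding Omega_top_def continuous_map_pairwise by (metis continuous_map_snd)
qed

lemma continuous_map_base_map:
  assumes "terminals_nonadjacent R vi vt" "graph_iso G1 G2 \<phi>V \<phi>E" "fin_graph G1"
  shows "continuous_map (Xtop G1 R vi vt) (Xtop G2 R vi vt) (base_map G1 G2 R vi vt \<phi>E)"
  unfolding continuous_map_def topspace_Xtop
proof (intro conjI allI impI)
  show "base_map G1 G2 R vi vt \<phi>E \<in> Xsp G1 R vi vt \<rightarrow> Xsp G2 R vi vt"
    using base_map_in_Xsp[OF assms] by blast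
next
  fix U assume "openin (Xtop G2 R vi vt) U"
  then have U: "openin (Omega_top G2 R) {\<omega> \<in> Omega G2 R. cls G2 R vi vt \<omega> \<in> U}"
    by (simp add: openin_Xtop)
  have "{\<omega> \<in> Omega G1 R. cls G1 R vi vt \<omega> \<in> {x \<in> Xsp G1 R vi vt. base_map G1 G2 R vi vt \<phi>E x \<in> U}}
     = {\<omega> \<in> topspace (Omega_top G1 R). relabel \<phi>E \<omega> \<in> {\<omega> \<in> Omega G2 R. cls G2 R vi vt \<omega> \<in> U}}"
    using base_map_cls[OF assms] relabel_Omega[OF assms(2)] cls_in_Xsp by (auto simp: topspace_Omega_top)
  moreover have "openin (Omega_top G1 R)
      {\<omega> \<in> topspace (Omega_top G1 R). relabel \<phi>E \<omega> \<in> {\<omega> \<in> Omega G2 R. cls G2 R vi vt \<omega> \<in> U}}"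
    using continuous_map_relabel[OF assms(2), of R] U unfolding continuous_map_def by blast
  ultimately show "openin (Xtop G1 R vi vt) {x \<in> Xsp G1 R vi vt. base_map G1 G2 R vi vt \<phi>E x \<in> U}"
    unfolding openin_Xtop by auto
qed

lemma homeomorphic_map_base_map:
  assumes "terminals_nonadjacent R vi vt" "graph_iso G1 G2 \<phi>V \<phi>E" "fin_graph G1"
  shows "homeomorphic_map (Xtop G1 R vi vt) (Xtop G2 R vi vt) (base_map G1 G2 R vi vt \<phi>E)"
proof -
  let ?\<psi>E = "inv_into (edges G1) \<phi>E"
  have inv: "graph_iso G2 G1 (inv_into (verts G1) \<phi>V) ?\<psi>E" by (rule graph_iso_inv[OF assms(2,3)])
  have fin2: "fin_graph G2" by (rule fin_graph_iso[OF assms(2,3)])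
  have "base_map G1 G2 R vi vt \<phi>E (base_map G2 G1 R vi vt ?\<psi>E y) = y" if "y \<in> Xsp G2 R vi vt" for y
  proof -
    have "inv_into (edges G2) ?\<psi>E e = \<phi>E e" if "e \<in> edges G1" for e
      using assms(2) that by (auto simp: graph_iso_def bij_betw_def inv_into_inv_into_eq)
    then have "base_map G1 G2 R vi vt \<phi>E (base_map G2 G1 R vi vt ?\<psi>E y)
        = base_map G1 G2 R vi vt (inv_into (edges G2) ?\<psi>E) (base_map G2 G1 R vi vt ?\<psi>E y)"
      using base_map_cong[OF base_map_in_Xsp[OF assms(1) inv fin2 that]] by metis
    then show ?thesis using base_map_inv[OF assms(1) inv fin2 that] by simp
  qed
  then have "homeomorphic_maps (Xtop G1 R vi vt) (Xtop G2 R vi vt)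
      (base_map G1 G2 R vi vt \<phi>E) (base_map G2 G1 R vi vt ?\<psi>E)"
    unfolding homeomorphic_maps_def topspace_Xtop
    using continuous_map_base_map[OF assms] continuous_map_base_map[OF assms(1) inv fin2]
      base_map_inv[OF assms] by blast
  then show ?thesis by (rule homeomorphic_maps_imp_map)
qed

section \<open>Prefixes and canonical maps between cells\<close>

lemma map_upt_eq_iff: "map f [0..<length P] = P \<longleftrightarrow> (\<forall>i<length P. f i = P ! i)"
proof -
  have "map f [0..<length P] = P \<longleftrightarrow> (length (map f [0..<length P]) = length P \<and>
      (\<forall>i<length (map f [0..<length P]). map f [0..<length P] ! i = P ! i))"
    by (rule list_eq_iff_nth_eq)
  also have "\<dots> \<longleftrightarrow> (\<forall>i<length P. f i = P ! i)"
    by (simp only: length_map length_upt diff_zero) (auto simp del: upt_Suc)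
  finally show ?thesis .
qed

lemma has_prefix_iff:
  "has_prefix \<epsilon> \<omega> \<longleftrightarrow> fst \<omega> = fst \<epsilon> \<and> (\<forall>i<length (snd \<epsilon>). snd \<omega> i = snd \<epsilon> ! i)"
  by (cases \<epsilon>) (simp add: has_prefix_def pre_def map_upt_eq_iff)

lemma has_prefix_pre: "has_prefix (pre n \<omega>) \<omega>"
  by (simp add: has_prefix_def)

lemma has_prefix_append_iff:
  "has_prefix (a, P @ Q) \<omega> \<longleftrightarrow> has_prefix (a, P) \<omega> \<and> (\<forall>i<length Q. snd \<omega> (length P + i) = Q ! i)"
proof -
  have "(\<forall>i<length (P @ Q). snd \<omega> i = (P @ Q) ! i) \<longleftrightarrow>
        (\<forall>i<length P. snd \<omega> i = P ! i) \<and> (\<forall>i<length Q. snd \<omega> (length P + i) = Q ! i)"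
  proof safe
    fix i assume "\<forall>i<length (P @ Q). snd \<omega> i = (P @ Q) ! i" "i < length P"
    then show "snd \<omega> i = P ! i" by (metis length_append nth_append trans_less_add1)
  next
    fix i assume "\<forall>i<length (P @ Q). snd \<omega> i = (P @ Q) ! i" "i < length Q"
    then show "snd \<omega> (length P + i) = Q ! i"
      by (metis length_append nat_add_left_cancel_less nth_append_length_plus)
  next
    fix i assume a: "\<forall>i<length P. snd \<omega> i = P ! i" "\<forall>i<length Q. snd \<omega> (length P + i) = Q ! i"
      "i < length (P @ Q)"
    show "snd \<omega> i = (P @ Q) ! i"
    proof (cases "i < length P")
      case False
      then obtain j where "i = length P + j" by (metis le_iff_add not_less)
      then show ?thesis using a by (simp add: nth_append)
    qed (use a in \<open>simp add: nth_append\<close>)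
  qed
  then show ?thesis by (simp add: has_prefix_iff)
qed

lemma has_prefix_eqI:
  assumes "has_prefix \<epsilon> \<omega>" "has_prefix \<epsilon> \<omega>'"
    and "\<And>k. snd \<omega> (length (snd \<epsilon>) + k) = snd \<omega>' (length (snd \<epsilon>) + k)"
  shows "\<omega> = \<omega>'"
proof -
  have "snd \<omega> i = snd \<omega>' i" for i
  proof (cases "i < length (snd \<epsilon>)")
    case True then show ?thesis using assms(1,2) by (simp add: has_prefix_iff)
  next
    case False
    then obtain k where "i = length (snd \<epsilon>) + k" by (metis le_iff_add not_less)
    then show ?thesis using assms(3) by simp
  qed
  moreover have "fst \<omega> = fst \<omega>'" using assms(1,2) by (simp add: has_prefix_iff)
  ultimately show ?thesis by (simp add: prod_eq_iff fun_eq_iff)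
qed

definition pad :: "'e \<times> 'r list \<Rightarrow> 'r \<Rightarrow> 'e \<times> (nat \<Rightarrow> 'r)" where
  "pad \<epsilon> z0 = (fst \<epsilon>, \<lambda>n. if n < length (snd \<epsilon>) then snd \<epsilon> ! n else z0)"

lemma has_prefix_pad: "has_prefix \<epsilon> (pad \<epsilon> z0)"
  by (simp add: has_prefix_iff pad_def)

lemma pad_Omega: "\<epsilon> \<in> words G R \<Longrightarrow> z0 \<in> edges R \<Longrightarrow> pad \<epsilon> z0 \<in> Omega G R"
  by (auto simp: pad_def Omega_iff words_def)

lemma fst_reprefix [simp]: "fst (reprefix \<epsilon> \<epsilon>' \<omega>) = fst \<epsilon>'"
  by (simp add: reprefix_def)

lemma snd_reprefix_shift: "snd (reprefix \<epsilon> \<epsilon>' \<omega>) (length (snd \<epsilon>') + j) = snd \<omega> (length (snd \<epsilon>) + j)"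
  by (simp add: reprefix_def add.commute)

lemma has_prefix_reprefix: "has_prefix \<epsilon>' (reprefix \<epsilon> \<epsilon>' \<omega>)"
  by (simp add: has_prefix_iff reprefix_def)

lemma reprefix_Omega: "\<epsilon>' \<in> words G' R \<Longrightarrow> \<omega> \<in> Omega G R \<Longrightarrow> reprefix \<epsilon> \<epsilon>' \<omega> \<in> Omega G' R"
  by (auto simp: Omega_iff words_def reprefix_def)

lemma reprefix_reprefix: "reprefix \<epsilon>' \<epsilon>'' (reprefix \<epsilon> \<epsilon>' \<omega>) = reprefix \<epsilon> \<epsilon>'' \<omega>"
proof -
  have "snd (reprefix \<epsilon>' \<epsilon>'' (reprefix \<epsilon> \<epsilon>' \<omega>)) n = snd (reprefix \<epsilon> \<epsilon>'' \<omega>) n" for n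
  proof (cases "n < length (snd \<epsilon>'')")
    case False
    then obtain k where "n = length (snd \<epsilon>'') + k" by (metis le_iff_add not_less)
    then show ?thesis by (simp add: reprefix_def)
  qed (simp add: reprefix_def)
  then show ?thesis by (simp add: prod_eq_iff fun_eq_iff)
qed

lemma reprefix_self: "has_prefix \<epsilon> \<omega> \<Longrightarrow> reprefix \<epsilon> \<epsilon> \<omega> = \<omega>"
  by (rule has_prefix_eqI[OF has_prefix_reprefix]) (simp_all add: snd_reprefix_shift)

lemma reprefix_append:
  assumes "has_prefix (a, P @ u) \<omega>"
  shows "reprefix (a, P @ u) (a', P' @ u) \<omega> = reprefix (a, P) (a', P') \<omega>"
proof -
  have tail: "snd \<omega> (length P + i) = u ! i" if "i < length u" for i
    using assms that by (simp add: has_prefix_append_iff)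
  have "snd (reprefix (a, P @ u) (a', P' @ u) \<omega>) n = snd (reprefix (a, P) (a', P') \<omega>) n" for n
  proof (cases "n < length P'")
    case False
    then obtain i where n: "n = length P' + i" by (metis le_iff_add not_less)
    then show ?thesis
      using tail[of i] by (cases "i < length u") (simp_all add: reprefix_def nth_append add.commute)
  qed (simp add: reprefix_def nth_append)
  then show ?thesis by (simp add: prod_eq_iff fun_eq_iff)
qed

lemma relabel_eq_reprefix:
  "has_prefix (e, P) \<omega> \<Longrightarrow> relabel \<phi>E \<omega> = reprefix (e, P) (\<phi>E e, P) \<omega>"
proof (rule has_prefix_eqI[OF _ has_prefix_reprefix])
  assume "has_prefix (e, P) \<omega>"
  then show "has_prefix (\<phi>E e, P) (relabel \<phi>E \<omega>)" by (simp add: has_prefix_iff relabel_def)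
  show "snd (relabel \<phi>E \<omega>) (length (snd (\<phi>E e, P)) + k) =
      snd (reprefix (e, P) (\<phi>E e, P) \<omega>) (length (snd (\<phi>E e, P)) + k)" for k
    using snd_reprefix_shift[of "(e, P)" "(\<phi>E e, P)" \<omega> k] by (simp add: relabel_def)
qed

lemma canonical_onD:
  "canonical_on G G' R vi vt \<epsilon> \<epsilon>' f \<Longrightarrow> \<omega> \<in> Omega G R \<Longrightarrow> has_prefix \<epsilon> \<omega> \<Longrightarrow>
     f (cls G R vi vt \<omega>) = cls G' R vi vt (reprefix \<epsilon> \<epsilon>' \<omega>)"
  by (simp add: canonical_on_def)

lemma canonical_on_cong:
  "(\<And>x. x \<in> Xsp G R vi vt \<Longrightarrow> f x = g x) \<Longrightarrow>
     canonical_on G G' R vi vt \<epsilon> \<epsilon>' f = canonical_on G G' R vi vt \<epsilon> \<epsilon>' g"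
  unfolding canonical_on_def using cls_in_Xsp by metis

lemma is_loopw_append:
  assumes "terminals_nonadjacent R vi vt" "set u \<subseteq> edges R"
    and "is_loopw G R vi vt (a, P) = is_loopw G' R vi vt (a', P')"
  shows "is_loopw G R vi vt (a, P @ u) = is_loopw G' R vi vt (a', P' @ u)"
proof (cases u rule: rev_cases)
  case (snoc u' z)
  then have "z \<in> edges R" using assms(2) by auto
  then show ?thesis using is_loopw_snoc[OF assms(1)] snoc by (metis append_assoc)
qed (use assms(3) in simp)

lemma canonical_on_append:
  assumes "terminals_nonadjacent R vi vt" "set u \<subseteq> edges R"
    and "canonical_on G G' R vi vt (a, P) (a', P') f"
  shows "canonical_on G G' R vi vt (a, P @ u) (a', P' @ u) f"
  unfolding canonical_on_def
proof (intro conjI ballI impI)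
  show "is_loopw G R vi vt (a, P @ u) = is_loopw G' R vi vt (a', P' @ u)"
    using assms(3) by (intro is_loopw_append[OF assms(1,2)]) (simp add: canonical_on_def)
  fix \<omega> assume "\<omega> \<in> Omega G R" "has_prefix (a, P @ u) \<omega>"
  then show "f (cls G R vi vt \<omega>) = cls G' R vi vt (reprefix (a, P @ u) (a', P' @ u) \<omega>)"
    using canonical_onD[OF assms(3)] by (simp add: reprefix_append has_prefix_append_iff)
qed

lemma canonical_on_comp:
  assumes "canonical_on G1 G2 R vi vt \<epsilon>1 \<epsilon>2 f" "canonical_on G2 G3 R vi vt \<epsilon>2 \<epsilon>3 g"
    and "\<epsilon>2 \<in> words G2 R"
  shows "canonical_on G1 G3 R vi vt \<epsilon>1 \<epsilon>3 (g \<circ> f)"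
  unfolding canonical_on_def
proof (intro conjI ballI impI)
  show "is_loopw G1 R vi vt \<epsilon>1 = is_loopw G3 R vi vt \<epsilon>3"
    using assms(1,2) by (simp add: canonical_on_def)
  fix \<omega> assume "\<omega> \<in> Omega G1 R" "has_prefix \<epsilon>1 \<omega>"
  then show "(g \<circ> f) (cls G1 R vi vt \<omega>) = cls G3 R vi vt (reprefix \<epsilon>1 \<epsilon>3 \<omega>)"
    using canonical_onD[OF assms(1)] canonical_onD[OF assms(2) reprefix_Omega[OF assms(3)] has_prefix_reprefix]
    by (simp add: reprefix_reprefix)
qed

lemma canonical_on_inv:
  assumes "canonical_on G1 G2 R vi vt \<epsilon>1 \<epsilon>2 f" "inj_on f (Xsp G1 R vi vt)" "\<epsilon>1 \<in> words G1 R"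
  shows "canonical_on G2 G1 R vi vt \<epsilon>2 \<epsilon>1 (inv_into (Xsp G1 R vi vt) f)"
  unfolding canonical_on_def
proof (intro conjI ballI impI)
  fix \<rho> assume \<rho>: "\<rho> \<in> Omega G2 R" "has_prefix \<epsilon>2 \<rho>"
  let ?\<omega> = "reprefix \<epsilon>2 \<epsilon>1 \<rho>"
  have "?\<omega> \<in> Omega G1 R" by (rule reprefix_Omega[OF assms(3) \<rho>(1)])
  moreover have "f (cls G1 R vi vt ?\<omega>) = cls G2 R vi vt \<rho>"
    using canonical_onD[OF assms(1) \<open>?\<omega> \<in> Omega G1 R\<close> has_prefix_reprefix]
    by (simp add: reprefix_reprefix reprefix_self[OF \<rho>(2)])
  ultimately show "inv_into (Xsp G1 R vi vt) f (cls G2 R vi vt \<rho>) = cls G1 R vi vt ?\<omega>"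
    using inv_into_f_eq[OF assms(2) cls_in_Xsp] by blast
qed (use assms(1) in \<open>simp add: canonical_on_def\<close>)

lemma canonical_on_base_map:
  assumes "terminals_nonadjacent R vi vt" "graph_iso G1 G2 \<phi>V \<phi>E" "fin_graph G1" "e \<in> edges G1"
  shows "canonical_on G1 G2 R vi vt (e, P) (\<phi>E e, P) (base_map G1 G2 R vi vt \<phi>E)"
  unfolding canonical_on_def
  using is_loopw_graph_iso[OF assms(2-4), of R vi vt P] base_map_cls[OF assms(1-3)] relabel_eq_reprefix
  by metis

lemma canonical_on_conjugate:
  assumes "terminals_nonadjacent R vi vt" "graph_iso G G \<phi>V \<phi>E" "fin_graph G" "inj_on f (Xsp G0 R vi vt)"
    and "canonical_on G0 G R vi vt (a, P) (b, Q) f" "(b, Q) \<in> words G R"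
    and "canonical_on G0 G R vi vt (a', P') (b', Q') f" "(a', P') \<in> words G0 R"
    and "set u \<subseteq> edges R" "set u' \<subseteq> edges R" "\<phi>E b = b'" "Q @ u = Q' @ u'"
  shows "canonical_on G0 G0 R vi vt (a, P @ u) (a', P' @ u')
           (inv_into (Xsp G0 R vi vt) f \<circ> base_map G G R vi vt \<phi>E \<circ> f)"
proof -
  have b: "b \<in> edges G" "set Q \<subseteq> edges R" using assms(6) by (auto simp: words_def)
  have "set (Q' @ u') \<subseteq> edges R" using b(2) assms(9) by (simp add: assms(12)[symmetric])
  then have "(b, Q @ u) \<in> words G R" "(b', Q' @ u') \<in> words G R" "(a', P' @ u') \<in> words G0 R"
    using b assms(8-11) graph_iso_edge(1)[OF assms(2) b(1)] by (auto simp: words_def)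
  moreover have "canonical_on G G R vi vt (b, Q @ u) (b', Q' @ u') (base_map G G R vi vt \<phi>E)"
    using canonical_on_base_map[OF assms(1-3) b(1), of "Q @ u"] assms(11,12) by simp
  moreover have "canonical_on G G0 R vi vt (b', Q' @ u') (a', P' @ u') (inv_into (Xsp G0 R vi vt) f)"
    using canonical_on_append[OF assms(1,10,7)] canonical_on_inv[OF _ assms(4)] \<open>(a', P' @ u') \<in> words G0 R\<close>
    by blast
  ultimately show ?thesis
    using canonical_on_append[OF assms(1,9,5)] canonical_on_comp by metis
qed

section \<open>Refining covers by cells\<close>

definition expanding_rule :: "('w, 'r) dgraph \<Rightarrow> 'w \<Rightarrow> 'w \<Rightarrow> bool" where
  "expanding_rule R vi vt \<longleftrightarrow> terminals_nonadjacent R vi vt \<and> fin_graph R \<and> no_isolated R \<and>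
     vi \<in> verts R \<and> vt \<in> verts R \<and> (\<exists>x\<in>verts R. x \<noteq> vi \<and> x \<noteq> vt)"

lemma expanding_imp_expanding_rule:
  assumes "expanding G0 R vi vt"
  shows "expanding_rule R vi vt"
proof -
  have "\<not> verts R \<subseteq> {vi, vt}"
  proof
    assume "verts R \<subseteq> {vi, vt}"
    then have "card (verts R) \<le> card {vi, vt}" by (intro card_mono) auto
    also have "\<dots> \<le> 2" by (simp add: card_insert_if)
    finally have "card (verts R) \<le> 2" .
    then show False using assms by (simp add: expanding_def)
  qed
  then show ?thesis using assms by (auto simp: expanding_rule_def terminals_nonadjacent_def expanding_def)
qed

lemma expanding_rule_edge:
  assumes "expanding_rule R vi vt"
  obtains z where "z \<in> edges R"
  using assms by (auto simp: expanding_rule_def no_isolated_def)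

definition created_below :: "'e \<Rightarrow> 'r list \<Rightarrow> 'v + ('e \<times> 'r list \<times> 'w) \<Rightarrow> bool" where
  "created_below e P c \<longleftrightarrow> (\<exists>Q x. c = Inr (e, Q, x) \<and> length P \<le> length Q \<and> take (length P) Q = P)"

text \<open>Go from \<open>(e, P)\<close> to a child attached to an inner vertex of \<open>R\<close>, then to a grandchild
  attached to no endpoint of the child that is inherited from \<open>(e, P)\<close>.\<close>
lemma exists_inner_suffix:
  assumes "expanding_rule R vi vt"
  obtains p where "set p \<subseteq> edges R"
    and "\<And>(G :: ('v, 'e) dgraph) e P. endpoints G R vi vt (e, P @ p) \<subseteq> Collect (created_below e P)"
proof -
  have nis: "no_isolated R" and vin: "vi \<in> verts R" "vt \<in> verts R"
    and R: "vi \<noteq> vt" "\<And>z. z \<in> edges R \<Longrightarrow> \<not> (src R z = vi \<and> tgt R z = vt) \<and> \<not> (src R z = vt \<and> tgt R z = vi)"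
    using assms by (auto simp: expanding_rule_def terminals_nonadjacent_def)
  obtain x where x: "x \<in> verts R" "x \<noteq> vi" "x \<noteq> vt" using assms by (auto simp: expanding_rule_def)
  obtain zx where zx: "zx \<in> edges R" "src R zx = x \<or> tgt R zx = x" using nis x by (auto simp: no_isolated_def)
  obtain za where za: "za \<in> edges R" "src R za = vt \<or> tgt R za = vt" using nis vin by (auto simp: no_isolated_def)
  then have za': "src R za \<noteq> vi" "tgt R za \<noteq> vi" using R by auto
  obtain zb where zb: "zb \<in> edges R" "src R zb = vi \<or> tgt R zb = vi" using nis vin by (auto simp: no_isolated_def)
  then have zb': "src R zb \<noteq> vt" "tgt R zb \<noteq> vt" using R by auto
  define p where "p = [zx, if src R zx = x then zb else za]"
  have "endpoints G R vi vt (e, P @ p) \<subseteq> Collect (created_below e P)" for G :: "('v, 'e) dgraph" and e P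
  proof -
    define ab where "ab = child_ends R vi vt e P (ends G R vi vt (e, P)) zx"
    have "ends G R vi vt (e, P @ p) = child_ends R vi vt e (P @ [zx]) ab (if src R zx = x then zb else za)"
      using ends_snoc[of G R vi vt e "P @ [zx]"] ends_snoc[of G R vi vt e P zx] by (simp add: p_def ab_def)
    moreover have "fst ab = Inr (e, P, x)" if "src R zx = x"
      using that x by (simp add: ab_def child_ends_def Let_def)
    moreover have "snd ab = Inr (e, P, x)" if "src R zx \<noteq> x"
      using that x zx by (simp add: ab_def child_ends_def Let_def)
    ultimately show ?thesis
      using zb' za' x by (cases "src R zx = x") (auto simp: endpoints_def child_ends_def Let_def created_below_def)
  qed
  moreover have "set p \<subseteq> edges R" using zx za zb by (auto simp: p_def)
  ultimately show ?thesis using that by blast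
qed

lemma has_prefix_if_created_below:
  assumes "endpoints G R vi vt (e, P @ p) \<subseteq> Collect (created_below e P)"
    and "has_prefix (e, P @ p) \<omega>" "gsim G R vi vt \<omega> \<omega>'"
  shows "has_prefix (e, P) \<omega>'"
proof -
  define n where "n = length (P @ p)"
  have "pre n \<omega> = (e, P @ p)" using assms(2) by (simp add: has_prefix_def n_def)
  moreover have "sharevert G R vi vt (pre n \<omega>) (pre n \<omega>')" using assms(3) by (simp add: gsim_def)
  ultimately obtain c where c1: "c \<in> endpoints G R vi vt (e, P @ p)"
    and c2: "c \<in> endpoints G R vi vt (fst \<omega>', map (snd \<omega>') [0..<n])"
    unfolding sharevert_iff_endpoints by (auto simp: pre_def)
  obtain Q x where cQ: "c = Inr (e, Q, x)" "length P \<le> length Q" "take (length P) Q = P"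
    using c1 assms(1) unfolding created_below_def by blast
  have "fst \<omega>' = e" "take (length Q) (map (snd \<omega>') [0..<n]) = Q" "length Q < n"
    using c2 by (auto simp: cQ(1) elim: endpointsE)
  then have "take (length P) (map (snd \<omega>') [0..<n]) = P" "length P \<le> n"
    using cQ by (metis min.absorb1 take_take, linarith)
  then have "map (snd \<omega>') [0..<length P] = P"
    by (metis take_map take_upt add_0)
  then show ?thesis using \<open>fst \<omega>' = e\<close> by (simp add: has_prefix_def pre_def)
qed

lemma exists_separating_suffix:
  assumes "expanding_rule R vi vt"
  obtains p where "set p \<subseteq> edges R"
    and "\<And>(G :: ('v, 'e) dgraph) e P \<omega> \<omega>'.
      has_prefix (e, P @ p) \<omega> \<Longrightarrow> gsim G R vi vt \<omega> \<omega>' \<Longrightarrow> has_prefix (e, P) \<omega>'"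
  using exists_inner_suffix[OF assms] has_prefix_if_created_below by metis

lemma two_prefixes:
  assumes "has_prefix \<delta> \<omega>" "has_prefix w \<omega>" "length (snd \<delta>) \<le> length (snd w)"
  shows "\<exists>u. w = (fst \<delta>, snd \<delta> @ u)"
proof -
  have "fst \<delta> = fst w" using assms by (simp add: has_prefix_iff)
  moreover have "take (length (snd \<delta>)) (snd w) = snd \<delta>"
    using assms by (simp add: has_prefix_iff list_eq_iff_nth_eq)
  ultimately show ?thesis by (metis append_take_drop_id prod.collapse)
qed

lemma cover_has_prefix:
  fixes G :: "('v, 'e) dgraph" and R :: "('w, 'r) dgraph"
  assumes "expanding_rule R vi vt" "Xsp G R vi vt \<subseteq> (\<Union>\<delta>\<in>D. cell G R vi vt \<delta>)"
    and "w \<in> words G R" "\<And>\<delta>. \<delta> \<in> D \<Longrightarrow> length (snd \<delta>) \<le> length (snd w)"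
  shows "\<exists>\<delta>\<in>D. \<exists>u. w = (fst \<delta>, snd \<delta> @ u)"
proof -
  obtain z0 where z0: "z0 \<in> edges R" using expanding_rule_edge[OF assms(1)] .
  obtain p where p: "set p \<subseteq> edges R" and sep: "\<And>(G :: ('v, 'e) dgraph) e P \<omega> \<omega>'.
      has_prefix (e, P @ p) \<omega> \<Longrightarrow> gsim G R vi vt \<omega> \<omega>' \<Longrightarrow> has_prefix (e, P) \<omega>'"
    using exists_separating_suffix[OF assms(1)] by blast
  define \<omega> where "\<omega> = pad (fst w, snd w @ p) z0"
  have \<omega>: "\<omega> \<in> Omega G R" unfolding \<omega>_def using assms(3) p z0 by (intro pad_Omega) (auto simp: words_def)
  then obtain \<delta> \<omega>1 where \<delta>: "\<delta> \<in> D" and \<omega>1: "\<omega>1 \<in> Omega G R" "has_prefix \<delta> \<omega>1"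
    and eq: "cls G R vi vt \<omega> = cls G R vi vt \<omega>1"
    using assms(2) cls_in_Xsp[OF \<omega>] unfolding cell_def by blast
  have "gsim G R vi vt \<omega> \<omega>1"
    using eq cls_eq_iff[OF _ \<omega> \<omega>1(1)] assms(1) by (simp add: expanding_rule_def)
  then have "has_prefix (fst w, snd w) \<omega>1" using sep \<omega>_def has_prefix_pad by metis
  then show ?thesis using two_prefixes[OF \<omega>1(2) _ assms(4)[OF \<delta>]] \<delta> by auto
qed

lemma Inr_endpointD:
  "Inr (e', Q, y) \<in> endpoints G R vi vt (e, P) \<Longrightarrow> e' = e \<and> length Q < length P \<and> take (length Q) P = Q"
  by (auto elim: endpointsE)

lemma pre_append: "N \<le> m \<Longrightarrow> pre m \<omega> = (fst \<omega>, snd (pre N \<omega>) @ map (snd \<omega>) [N..<m])"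
  using upt_add_eq_append[of 0 N "m - N"] by (simp add: pre_def)

lemma take_pre: "N \<le> m \<Longrightarrow> take N (snd (pre m \<omega>)) = snd (pre N \<omega>)"
  by (simp add: pre_append[of N m \<omega>])

lemma endpoint_of_ancestor:
  assumes "s \<in> endpoints G R vi vt (e, P @ q)"
    and "\<And>Q x. s = Inr (e, Q, x) \<Longrightarrow> length Q < length P"
  shows "s \<in> endpoints G R vi vt (e, P)"
  using assms(1)
proof (induction q rule: rev_induct)
  case (snoc z q)
  have "s \<in> endpoints G R vi vt (e, P @ q) \<union> fresh_vertices e (P @ q)"
    using endpoints_snoc_subset[of G R vi vt e "P @ q" z] snoc.prems by auto
  moreover have "s \<notin> fresh_vertices e (P @ q)" using assms(2) by (auto simp: fresh_vertices_def)
  ultimately show ?case using snoc.IH by blast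
qed simp

lemma shared_descendant_vertex:
  assumes "has_prefix w1 \<omega>1" "has_prefix w2 \<omega>2" "length (snd w1) = N" "length (snd w2) = N" "w1 \<noteq> w2"
    and "N \<le> m" "s \<in> endpoints G R vi vt (pre m \<omega>1) \<inter> endpoints G R vi vt (pre m \<omega>2)"
  shows "s \<in> endpoints G R vi vt w1"
proof -
  have w: "pre N \<omega>1 = w1" "pre N \<omega>2 = w2" using assms(1-4) by (simp_all add: has_prefix_def)
  have old: "length Q < N" if s: "s = Inr (fst \<omega>1, Q, y)" for Q y
  proof (rule ccontr)
    assume "\<not> length Q < N"
    have p: "pre m \<omega>1 = (fst \<omega>1, snd (pre m \<omega>1))" "pre m \<omega>2 = (fst \<omega>2, snd (pre m \<omega>2))"
      by (simp_all add: pre_def)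
    have "Inr (fst \<omega>1, Q, y) \<in> endpoints G R vi vt (fst \<omega>1, snd (pre m \<omega>1))"
      "Inr (fst \<omega>1, Q, y) \<in> endpoints G R vi vt (fst \<omega>2, snd (pre m \<omega>2))"
      using assms(7) s p by simp_all
    then have "take (length Q) (snd (pre m \<omega>1)) = Q" "take (length Q) (snd (pre m \<omega>2)) = Q"
      "fst \<omega>2 = fst \<omega>1"
      by (auto dest: Inr_endpointD)
    then have "take N (snd (pre m \<omega>1)) = take N (snd (pre m \<omega>2))"
      using \<open>\<not> length Q < N\<close> by (metis min.absorb1 not_less take_take)
    then have "snd w1 = snd w2" using take_pre[OF assms(6)] w by metis
    then show False using assms(5) w \<open>fst \<omega>2 = fst \<omega>1\<close> by (auto simp: prod_eq_iff)
  qed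
  have "s \<in> endpoints G R vi vt (fst \<omega>1, snd (pre N \<omega>1) @ map (snd \<omega>1) [N..<m])"
    using assms(7) pre_append[OF assms(6), of \<omega>1] by simp
  then have "s \<in> endpoints G R vi vt (fst \<omega>1, snd (pre N \<omega>1))"
    by (rule endpoint_of_ancestor) (use old in auto)
  then show ?thesis using w(1) by (metis fst_pre prod.collapse)
qed

lemma endpoint_persists:
  assumes "s \<in> endpoints G R vi vt (pre N \<omega>)" "N \<le> m'" "m' \<le> m" "s \<in> endpoints G R vi vt (pre m \<omega>)"
  shows "s \<in> endpoints G R vi vt (pre m' \<omega>)"
proof -
  have old: "length Q < m'" if "s = Inr (fst \<omega>, Q, y)" for Q y
    using assms(1,2) that pre_def[of N \<omega>] by (auto elim: endpointsE)
  have "s \<in> endpoints G R vi vt (fst \<omega>, snd (pre m' \<omega>) @ map (snd \<omega>) [m'..<m])"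
    using assms(4) pre_append[OF assms(3), of \<omega>] by simp
  then have "s \<in> endpoints G R vi vt (fst \<omega>, snd (pre m' \<omega>))"
    by (rule endpoint_of_ancestor) (use old in auto)
  then show ?thesis by (simp add: pre_def)
qed

text \<open>If the interiors of two cells of the same level met, the common point would be
  the image of an endpoint of one of them.\<close>
lemma cell_interiors_disjoint:
  assumes "terminals_nonadjacent R vi vt"
    and "length (snd w1) = N" "length (snd w2) = N" "w1 \<noteq> w2"
  shows "cell_interior G R vi vt w1 \<inter> cell_interior G R vi vt w2 = {}"
proof (rule ccontr)
  assume "cell_interior G R vi vt w1 \<inter> cell_interior G R vi vt w2 \<noteq> {}"
  then obtain x where x1: "x \<in> cell_interior G R vi vt w1" and x2: "x \<in> cell_interior G R vi vt w2" by blast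
  obtain \<omega>1 where \<omega>1: "\<omega>1 \<in> Omega G R" "has_prefix w1 \<omega>1" "x = cls G R vi vt \<omega>1"
    using x1 unfolding cell_interior_def cell_def by blast
  obtain \<omega>2 where \<omega>2: "\<omega>2 \<in> Omega G R" "has_prefix w2 \<omega>2" "x = cls G R vi vt \<omega>2"
    using x2 unfolding cell_interior_def cell_def by blast
  have "gsim G R vi vt \<omega>1 \<omega>2" using cls_eq_iff[OF assms(1) \<omega>1(1) \<omega>2(1)] \<omega>1(3) \<omega>2(3) by simp
  then have shared: "\<exists>s\<in>endpoints G R vi vt w1. s \<in> endpoints G R vi vt (pre m \<omega>1)" if "N \<le> m" for m
    using shared_descendant_vertex[OF \<omega>1(2) \<omega>2(2) assms(2-4) that]
    by (force simp: gsim_def sharevert_iff_endpoints)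
  have w1: "pre N \<omega>1 = w1" using \<omega>1(2) assms(2) by (simp add: has_prefix_def)
  have "\<exists>s\<in>endpoints G R vi vt w1. \<forall>m\<ge>N. s \<in> endpoints G R vi vt (pre m \<omega>1)"
  proof (rule ccontr)
    assume "\<not> ?thesis"
    then obtain ma mb where ma: "ma \<ge> N" "fst (ends G R vi vt w1) \<notin> endpoints G R vi vt (pre ma \<omega>1)"
      and mb: "mb \<ge> N" "snd (ends G R vi vt w1) \<notin> endpoints G R vi vt (pre mb \<omega>1)"
      unfolding endpoints_def[of G R vi vt w1] by blast
    have "N \<le> max ma mb" using ma by simp
    then obtain s where s: "s \<in> endpoints G R vi vt w1" "s \<in> endpoints G R vi vt (pre (max ma mb) \<omega>1)"
      using shared by blast
    have "s \<in> endpoints G R vi vt (pre k \<omega>1)" if "N \<le> k" "k \<le> max ma mb" for k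
      using endpoint_persists[of s G R vi vt N \<omega>1 k "max ma mb"] s w1 that by simp
    then have "s \<in> endpoints G R vi vt (pre ma \<omega>1)" "s \<in> endpoints G R vi vt (pre mb \<omega>1)"
      using ma mb by simp_all
    then show False using s(1) ma(2) mb(2) unfolding endpoints_def[of G R vi vt w1] by blast
  qed
  then obtain s where "s \<in> endpoints G R vi vt w1" "\<forall>m\<ge>N. s \<in> endpoints G R vi vt (pre m \<omega>1)"
    by blast
  then have "x \<in> vpoint G R vi vt s" "s \<in> endpoints G R vi vt w1"
    unfolding vpoint_def \<omega>1(3) using \<omega>1(1) by (auto simp: endpoints_def)
  then show False using x1 unfolding cell_interior_def endpoints_def by auto
qed

lemma finite_words_length:
  assumes "finite (edges G)" "finite (edges R)"
  shows "finite {w \<in> words G R. length (snd w) = N}"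
proof (rule finite_subset)
  show "{w \<in> words G R. length (snd w) = N} \<subseteq> edges G \<times> {zs. set zs \<subseteq> edges R \<and> length zs = N}"
    by (auto simp: words_def)
  show "finite (edges G \<times> {zs. set zs \<subseteq> edges R \<and> length zs = N})"
    using assms by (simp add: finite_lists_length_eq)
qed

text \<open>The cells of a full expansion cover \<open>X(G)\<close> and have disjoint interiors.\<close>
lemma rearrangementI:
  assumes "terminals_nonadjacent R vi vt" "finite (edges G)" "finite (edges R)"
    and "homeomorphic_map (Xtop G R vi vt) (Xtop G' R vi vt) F"
    and "\<And>w. w \<in> words G R \<Longrightarrow> length (snd w) = N \<Longrightarrow> \<exists>t\<in>words G' R. canonical_on G G' R vi vt w t F"
  shows "rearrangement G G' R vi vt F"
proof -
  define Cov where "Cov = {w \<in> words G R. length (snd w) = N}"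
  have "(\<Union>w\<in>Cov. cell G R vi vt w) = Xsp G R vi vt"
  proof
    show "(\<Union>w\<in>Cov. cell G R vi vt w) \<subseteq> Xsp G R vi vt" by (auto simp: cell_def Xsp_def)
    show "Xsp G R vi vt \<subseteq> (\<Union>w\<in>Cov. cell G R vi vt w)"
    proof
      fix x assume "x \<in> Xsp G R vi vt"
      then obtain \<omega> where \<omega>: "\<omega> \<in> Omega G R" "x = cls G R vi vt \<omega>" unfolding Xsp_def by blast
      then have "pre N \<omega> \<in> Cov" by (auto simp: Cov_def words_def Omega_iff pre_def)
      moreover have "x \<in> cell G R vi vt (pre N \<omega>)" unfolding cell_def using \<omega> has_prefix_pre by blast
      ultimately show "x \<in> (\<Union>w\<in>Cov. cell G R vi vt w)" by blast
    qed
  qed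
  moreover have "finite Cov" unfolding Cov_def by (rule finite_words_length[OF assms(2,3)])
  moreover have "\<forall>w1\<in>Cov. \<forall>w2\<in>Cov. w1 \<noteq> w2 \<longrightarrow> cell_interior G R vi vt w1 \<inter> cell_interior G R vi vt w2 = {}"
    by (intro ballI impI cell_interiors_disjoint[OF assms(1)]) (simp_all add: Cov_def)
  ultimately show ?thesis
    unfolding rearrangement_def using assms(4,5) by (intro conjI exI[of _ Cov]) (auto simp: Cov_def)
qed

lemma rearrangement_image_cover:
  assumes "Xsp G R vi vt \<subseteq> (\<Union>\<delta>\<in>D. cell G R vi vt \<delta>)" "f ` Xsp G R vi vt = Xsp G' R vi vt"
    and "\<And>\<delta>. \<delta> \<in> D \<Longrightarrow> c \<delta> \<in> words G' R \<and> canonical_on G G' R vi vt \<delta> (c \<delta>) f"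
  shows "Xsp G' R vi vt \<subseteq> (\<Union>\<delta>\<in>D. cell G' R vi vt (c \<delta>))"
proof
  fix y assume "y \<in> Xsp G' R vi vt"
  then obtain x where "x \<in> Xsp G R vi vt" "y = f x" using assms(2) by blast
  then obtain \<delta> where \<delta>: "\<delta> \<in> D" "x \<in> cell G R vi vt \<delta>" "y = f x" using assms(1) by blast
  then obtain \<omega> where \<omega>: "\<omega> \<in> Omega G R" "has_prefix \<delta> \<omega>" "x = cls G R vi vt \<omega>"
    unfolding cell_def by blast
  have c: "c \<delta> \<in> words G' R" "canonical_on G G' R vi vt \<delta> (c \<delta>) f" using assms(3)[OF \<delta>(1)] by simp_all
  have "y = cls G' R vi vt (reprefix \<delta> (c \<delta>) \<omega>)"
    using canonical_onD[OF c(2) \<omega>(1,2)] \<delta>(3) \<omega>(3) by simp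
  moreover have "reprefix \<delta> (c \<delta>) \<omega> \<in> Omega G' R" by (rule reprefix_Omega[OF c(1) \<omega>(1)])
  ultimately have "y \<in> cell G' R vi vt (c \<delta>)" unfolding cell_def using has_prefix_reprefix by blast
  then show "y \<in> (\<Union>\<delta>\<in>D. cell G' R vi vt (c \<delta>))" using \<delta>(1) by blast
qed

section \<open>Automorphisms of a graph\<close>

lemma aut_groupD:
  "\<phi> \<in> carrier (aut_group G) \<Longrightarrow>
     graph_iso G G (fst \<phi>) (snd \<phi>) \<and> fst \<phi> \<in> extensional (verts G) \<and> snd \<phi> \<in> extensional (edges G)"
  by (auto simp: aut_group_def)

lemma aut_group_mult_closed:
  assumes "fin_graph G" "\<phi> \<in> carrier (aut_group G)" "\<psi> \<in> carrier (aut_group G)"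
  shows "\<phi> \<otimes>\<^bsub>aut_group G\<^esub> \<psi> \<in> carrier (aut_group G)"
proof -
  have "graph_iso G G (fst \<phi> \<circ> fst \<psi>) (snd \<phi> \<circ> snd \<psi>)"
    using graph_iso_comp[OF _ _ assms(1)] aut_groupD[OF assms(2)] aut_groupD[OF assms(3)] by blast
  then have "graph_iso G G (compose (verts G) (fst \<phi>) (fst \<psi>)) (compose (edges G) (snd \<phi>) (snd \<psi>))"
    by (rule graph_iso_cong[OF _ assms(1)]) (simp_all add: compose_def)
  then show ?thesis by (auto simp: aut_group_def split_beta)
qed

lemma finite_carrier_aut_group:
  assumes "fin_graph G"
  shows "finite (carrier (aut_group G))"
proof (rule finite_subset)
  show "carrier (aut_group G) \<subseteq> (verts G \<rightarrow>\<^sub>E verts G) \<times> (edges G \<rightarrow>\<^sub>E edges G)"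
    by (auto simp: aut_group_def graph_iso_def bij_betw_def PiE_def Pi_def)
  show "finite ((verts G \<rightarrow>\<^sub>E verts G) \<times> (edges G \<rightarrow>\<^sub>E edges G))"
    using assms by (simp add: fin_graph_def finite_PiE)
qed

lemma graph_iso_vertex_eq:
  assumes "graph_iso G H \<phi>V \<phi>E" "graph_iso G H \<psi>V \<psi>E" "e \<in> edges G" "\<phi>E e = \<psi>E e"
    and "src G e = v \<or> tgt G e = v"
  shows "\<phi>V v = \<psi>V v"
proof -
  have "src H (\<phi>E e) = \<phi>V (src G e)" "tgt H (\<phi>E e) = \<phi>V (tgt G e)"
    "src H (\<psi>E e) = \<psi>V (src G e)" "tgt H (\<psi>E e) = \<psi>V (tgt G e)"
    using graph_iso_edge[OF assms(1,3)] graph_iso_edge[OF assms(2,3)] by simp_all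
  then have "\<phi>V (src G e) = \<psi>V (src G e)" "\<phi>V (tgt G e) = \<psi>V (tgt G e)"
    using assms(4) by simp_all
  then show ?thesis using assms(5) by blast
qed

lemma aut_group_eqI:
  assumes "no_isolated G" "\<phi> \<in> carrier (aut_group G)" "\<psi> \<in> carrier (aut_group G)"
    and "\<And>e. e \<in> edges G \<Longrightarrow> snd \<phi> e = snd \<psi> e"
  shows "\<phi> = \<psi>"
proof -
  have \<phi>: "graph_iso G G (fst \<phi>) (snd \<phi>)" "fst \<phi> \<in> extensional (verts G)" "snd \<phi> \<in> extensional (edges G)"
    and \<psi>: "graph_iso G G (fst \<psi>) (snd \<psi>)" "fst \<psi> \<in> extensional (verts G)" "snd \<psi> \<in> extensional (edges G)"
    using aut_groupD[OF assms(2)] aut_groupD[OF assms(3)] by simp_all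
  have "fst \<phi> v = fst \<psi> v" if v: "v \<in> verts G" for v
  proof -
    obtain e where "e \<in> edges G" "src G e = v \<or> tgt G e = v"
      using assms(1) v unfolding no_isolated_def by blast
    then show ?thesis using graph_iso_vertex_eq[OF \<phi>(1) \<psi>(1)] assms(4) by blast
  qed
  then have "fst \<phi> = fst \<psi>" by (rule extensionalityI[OF \<phi>(2) \<psi>(2)])
  moreover have "snd \<phi> = snd \<psi>" using assms(4) by (rule extensionalityI[OF \<phi>(3) \<psi>(3)])
  ultimately show ?thesis by (simp add: prod_eq_iff)
qed

text \<open>Unlike \<open>group.iso_set_sym\<close>, this needs only that the multiplication of the
  domain is closed.\<close>
lemma inv_into_iso:
  assumes "h \<in> iso G H" "\<And>x y. x \<in> carrier G \<Longrightarrow> y \<in> carrier G \<Longrightarrow> x \<otimes>\<^bsub>G\<^esub> y \<in> carrier G"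
  shows "inv_into (carrier G) h \<in> iso H G"
proof -
  let ?k = "inv_into (carrier G) h"
  have h: "h \<in> hom G H" "bij_betw h (carrier G) (carrier H)" using assms(1) by (auto simp: iso_def)
  have k: "bij_betw ?k (carrier H) (carrier G)" by (rule bij_betw_inv_into[OF h(2)])
  have "?k (x \<otimes>\<^bsub>H\<^esub> y) = ?k x \<otimes>\<^bsub>G\<^esub> ?k y" if "x \<in> carrier H" "y \<in> carrier H" for x y
  proof (rule inv_into_f_eq)
    show "inj_on h (carrier G)" using h(2) by (simp add: bij_betw_def)
    show "?k x \<otimes>\<^bsub>G\<^esub> ?k y \<in> carrier G" using k that assms(2) by (simp add: bij_betwE)
    show "h (?k x \<otimes>\<^bsub>G\<^esub> ?k y) = x \<otimes>\<^bsub>H\<^esub> y"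
      using h k that by (simp add: hom_mult bij_betwE bij_betw_inv_into_right)
  qed
  then show ?thesis using k bij_betwE[OF k] by (auto simp: iso_def hom_def)
qed

text \<open>Follow a cell deep enough that all representatives of its points keep their first letter.\<close>
lemma base_map_determines_edge_map:
  fixes G' :: "('u, 'd) dgraph"
  assumes "expanding_rule R vi vt" "graph_iso G G' \<phi>V \<phi>E" "graph_iso G G' \<psi>V \<psi>E" "fin_graph G"
    and "\<And>y. y \<in> Xsp G R vi vt \<Longrightarrow> base_map G G' R vi vt \<phi>E y = base_map G G' R vi vt \<psi>E y"
    and "e \<in> edges G"
  shows "\<phi>E e = \<psi>E e"
proof -
  have ok: "terminals_nonadjacent R vi vt" using assms(1) by (simp add: expanding_rule_def)
  obtain z0 where z0: "z0 \<in> edges R" using expanding_rule_edge[OF assms(1)] .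
  obtain p where p: "set p \<subseteq> edges R" and sep: "\<And>(G :: ('u, 'd) dgraph) e P \<omega> \<omega>'.
      has_prefix (e, P @ p) \<omega> \<Longrightarrow> gsim G R vi vt \<omega> \<omega>' \<Longrightarrow> has_prefix (e, P) \<omega>'"
    using exists_separating_suffix[OF assms(1)] by blast
  define \<omega> where "\<omega> = pad (e, p) z0"
  have \<omega>: "\<omega> \<in> Omega G R" unfolding \<omega>_def using assms(6) p z0 by (intro pad_Omega) (auto simp: words_def)
  have "cls G' R vi vt (relabel \<phi>E \<omega>) = cls G' R vi vt (relabel \<psi>E \<omega>)"
    using assms(5)[OF cls_in_Xsp[OF \<omega>]] base_map_cls[OF ok assms(2,4) \<omega>] base_map_cls[OF ok assms(3,4) \<omega>]
    by simp
  then have "gsim G' R vi vt (relabel \<phi>E \<omega>) (relabel \<psi>E \<omega>)"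
    using cls_eq_iff[OF ok relabel_Omega[OF assms(2) \<omega>] relabel_Omega[OF assms(3) \<omega>]] by simp
  moreover have "has_prefix (\<phi>E e, [] @ p) (relabel \<phi>E \<omega>)"
    using has_prefix_pad[of "(e, p)" z0] by (simp add: has_prefix_iff relabel_def \<omega>_def)
  ultimately have "has_prefix (\<phi>E e, []) (relabel \<psi>E \<omega>)" by (rule sep[rotated])
  then show ?thesis by (simp add: has_prefix_iff relabel_def \<omega>_def pad_def)
qed

section \<open>The stabilizer of a vertex of the complex\<close>

locale rearr_vertex =
  fixes G0 :: "('v, 'e) dgraph" and R :: "('w, 'r) dgraph" and vi vt :: 'w
    and G :: "('u, 'd) dgraph" and f :: "('e \<times> (nat \<Rightarrow> 'r)) set \<Rightarrow> ('d \<times> (nat \<Rightarrow> 'r)) set"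
  assumes expanding: "expanding G0 R vi vt"
    and fin_graph_G: "fin_graph G"
    and rearrangement_f: "rearrangement G0 G R vi vt f"
begin

abbreviation "X0 \<equiv> Xsp G0 R vi vt"
abbreviation "X \<equiv> Xsp G R vi vt"

lemma expanding_rule_R: "expanding_rule R vi vt"
  by (rule expanding_imp_expanding_rule[OF expanding])

lemma terminals_nonadjacent_R: "terminals_nonadjacent R vi vt"
  using expanding_rule_R by (simp add: expanding_rule_def)

lemma finite_edges: "finite (edges G0)" "finite (edges R)"
  using expanding by (simp_all add: expanding_def fin_graph_def)

lemma homeomorphic_map_f: "homeomorphic_map (Xtop G0 R vi vt) (Xtop G R vi vt) f"
  using rearrangement_f by (simp add: rearrangement_def)

lemma bij_betw_f: "bij_betw f X0 X"
  using homeomorphic_imp_injective_map[OF homeomorphic_map_f]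
    homeomorphic_imp_surjective_map[OF homeomorphic_map_f]
  by (simp add: bij_betw_def topspace_Xtop)

lemma f_in_X: "x \<in> X0 \<Longrightarrow> f x \<in> X"
  by (rule bij_betw_apply[OF bij_betw_f])

lemma inv_f_in_X0: "y \<in> X \<Longrightarrow> inv_into X0 f y \<in> X0"
  using bij_betw_f by (simp add: bij_betw_def inv_into_into)

lemma f_inv_f: "y \<in> X \<Longrightarrow> f (inv_into X0 f y) = y"
  using bij_betw_f by (simp add: bij_betw_def f_inv_into_f)

lemma homeomorphic_map_inv_f: "homeomorphic_map (Xtop G R vi vt) (Xtop G0 R vi vt) (inv_into X0 f)"
proof -
  obtain g where "homeomorphic_maps (Xtop G0 R vi vt) (Xtop G R vi vt) f g"
    using homeomorphic_map_f homeomorphic_map_maps by blast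
  then have g: "homeomorphic_map (Xtop G R vi vt) (Xtop G0 R vi vt) g" and fg: "\<forall>y\<in>X. f (g y) = y"
    by (auto simp: homeomorphic_maps_map topspace_Xtop)
  have "g ` X = X0" using homeomorphic_imp_surjective_map[OF g] by (simp add: topspace_Xtop)
  then have "inv_into X0 f y = g y" if "y \<in> X" for y
    using that fg bij_betw_f by (metis bij_betw_def image_eqI inv_into_f_eq)
  then show ?thesis by (intro homeomorphic_map_eq[OF g]) (simp add: topspace_Xtop)
qed

lemma canonical_cover_f:
  obtains D c where "finite D" "D \<subseteq> words G0 R" "X0 \<subseteq> (\<Union>\<delta>\<in>D. cell G0 R vi vt \<delta>)"
    and "\<And>\<delta>. \<delta> \<in> D \<Longrightarrow> c \<delta> \<in> words G R \<and> canonical_on G0 G R vi vt \<delta> (c \<delta>) f"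
proof -
  obtain D where D: "finite D" "D \<subseteq> words G0 R" "(\<Union>\<delta>\<in>D. cell G0 R vi vt \<delta>) = X0"
    and "\<forall>\<delta>\<in>D. \<exists>\<delta>'\<in>words G R. canonical_on G0 G R vi vt \<delta> \<delta>' f"
    using conjunct2[OF rearrangement_f[unfolded rearrangement_def]] by (elim exE conjE) (rule that)
  then have "\<forall>\<delta>\<in>D. \<exists>\<delta>'. \<delta>' \<in> words G R \<and> canonical_on G0 G R vi vt \<delta> \<delta>' f" by blast
  from bchoice[OF this] obtain c
    where "\<forall>\<delta>\<in>D. c \<delta> \<in> words G R \<and> canonical_on G0 G R vi vt \<delta> (c \<delta>) f" ..
  then show thesis using that[of D c] D by simp
qed

text \<open>The level \<open>N\<close> exceeds the lengths of the words of a cover for \<open>f\<close> and of their images.\<close>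
lemma canonical_level:
  obtains N where "\<And>\<phi>V \<phi>E w. graph_iso G G \<phi>V \<phi>E \<Longrightarrow> w \<in> words G0 R \<Longrightarrow> length (snd w) = N \<Longrightarrow>
      \<exists>t\<in>words G0 R. canonical_on G0 G0 R vi vt w t (inv_into X0 f \<circ> base_map G G R vi vt \<phi>E \<circ> f)"
proof -
  obtain D c where D: "finite D" "D \<subseteq> words G0 R" and cover0: "X0 \<subseteq> (\<Union>\<delta>\<in>D. cell G0 R vi vt \<delta>)"
    and c: "\<And>\<delta>. \<delta> \<in> D \<Longrightarrow> c \<delta> \<in> words G R \<and> canonical_on G0 G R vi vt \<delta> (c \<delta>) f"
    using canonical_cover_f by blast
  define M where "M = Max (insert 0 ((length \<circ> snd) ` D))"
  define M' where "M' = Max (insert 0 ((length \<circ> snd \<circ> c) ` D))"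
  have M: "length (snd \<delta>) \<le> M" "length (snd (c \<delta>)) \<le> M'" if "\<delta> \<in> D" for \<delta>
    unfolding M_def M'_def using D(1) that by (auto intro!: Max_ge)
  have cover: "X \<subseteq> (\<Union>\<delta>'\<in>c ` D. cell G R vi vt \<delta>')"
    using rearrangement_image_cover[OF cover0 _ c] bij_betw_f by (simp add: bij_betw_def)
  show thesis
  proof (rule that)
    fix \<phi>V \<phi>E w assume iso: "graph_iso G G \<phi>V \<phi>E" and w: "w \<in> words G0 R" "length (snd w) = M + M'"
    have "length (snd \<delta>) \<le> length (snd w)" if "\<delta> \<in> D" for \<delta>
      using M(1)[OF that] w(2) by linarith
    then obtain \<delta> u where \<delta>: "\<delta> \<in> D" "w = (fst \<delta>, snd \<delta> @ u)"
      using cover_has_prefix[OF expanding_rule_R cover0 w(1)] by blast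
    have u: "set u \<subseteq> edges R" "M' \<le> length u" using w \<delta> M(1)[OF \<delta>(1)] by (auto simp: words_def)
    define y where "y = (\<phi>E (fst (c \<delta>)), snd (c \<delta>) @ u)"
    have "y \<in> words G R"
      using c[OF \<delta>(1)] u(1) graph_iso_edge(1)[OF iso] by (auto simp: y_def words_def)
    moreover have "\<forall>\<delta>'\<in>c ` D. length (snd \<delta>') \<le> length (snd y)" using M(2) u(2) by (force simp: y_def)
    ultimately obtain \<delta>2 v where \<delta>2: "\<delta>2 \<in> D" "y = (fst (c \<delta>2), snd (c \<delta>2) @ v)"
      using cover_has_prefix[OF expanding_rule_R cover] by blast
    have v: "set v \<subseteq> edges R" using \<open>y \<in> words G R\<close> \<delta>2(2) by (auto simp: words_def)
    have c\<delta>: "canonical_on G0 G R vi vt (fst \<delta>, snd \<delta>) (fst (c \<delta>), snd (c \<delta>)) f"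
      "(fst (c \<delta>), snd (c \<delta>)) \<in> words G R"
      using c[OF \<delta>(1)] by simp_all
    have c\<delta>2: "canonical_on G0 G R vi vt (fst \<delta>2, snd \<delta>2) (fst (c \<delta>2), snd (c \<delta>2)) f"
      "(fst \<delta>2, snd \<delta>2) \<in> words G0 R"
      using c[OF \<delta>2(1)] \<delta>2(1) D(2) by auto
    have "\<phi>E (fst (c \<delta>)) = fst (c \<delta>2)" "snd (c \<delta>) @ u = snd (c \<delta>2) @ v"
      using \<delta>2(2) by (simp_all add: y_def)
    then have "canonical_on G0 G0 R vi vt w (fst \<delta>2, snd \<delta>2 @ v) (inv_into X0 f \<circ> base_map G G R vi vt \<phi>E \<circ> f)"
      unfolding \<delta>(2) using bij_betw_f
      by (intro canonical_on_conjugate[OF terminals_nonadjacent_R iso fin_graph_G _ c\<delta> c\<delta>2 u(1) v])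
        (simp_all add: bij_betw_def)
    moreover have "(fst \<delta>2, snd \<delta>2 @ v) \<in> words G0 R" using c\<delta>2(2) v by (auto simp: words_def)
    ultimately show "\<exists>t\<in>words G0 R. canonical_on G0 G0 R vi vt w t (inv_into X0 f \<circ> base_map G G R vi vt \<phi>E \<circ> f)"
      by blast
  qed
qed

definition conj_aut :: "('u \<Rightarrow> 'u) \<times> ('d \<Rightarrow> 'd) \<Rightarrow> ('e \<times> (nat \<Rightarrow> 'r)) set \<Rightarrow> ('e \<times> (nat \<Rightarrow> 'r)) set" where
  "conj_aut \<phi> = restrict (inv_into X0 f \<circ> base_map G G R vi vt (snd \<phi>) \<circ> f) X0"

lemma conj_aut_apply: "x \<in> X0 \<Longrightarrow> conj_aut \<phi> x = inv_into X0 f (base_map G G R vi vt (snd \<phi>) (f x))"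
  by (simp add: conj_aut_def)

lemma aut_base_map_in_X:
  "\<phi> \<in> carrier (aut_group G) \<Longrightarrow> y \<in> X \<Longrightarrow> base_map G G R vi vt (snd \<phi>) y \<in> X"
  using base_map_in_Xsp[OF terminals_nonadjacent_R _ fin_graph_G] aut_groupD by blast

lemma conj_aut_in_carrier:
  assumes "\<phi> \<in> carrier (aut_group G)"
  shows "conj_aut \<phi> \<in> carrier (rearr_group G0 R vi vt)"
proof -
  have iso: "graph_iso G G (fst \<phi>) (snd \<phi>)" using aut_groupD[OF assms] by simp
  have "homeomorphic_map (Xtop G0 R vi vt) (Xtop G0 R vi vt)
      (inv_into X0 f \<circ> base_map G G R vi vt (snd \<phi>) \<circ> f)"
    using homeomorphic_map_f homeomorphic_map_base_map[OF terminals_nonadjacent_R iso fin_graph_G]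
      homeomorphic_map_inv_f by (intro homeomorphic_map_compose)
  then have homeo: "homeomorphic_map (Xtop G0 R vi vt) (Xtop G0 R vi vt) (conj_aut \<phi>)"
    by (rule homeomorphic_map_eq) (simp add: conj_aut_def topspace_Xtop)
  obtain N where N: "\<And>\<phi>V \<phi>E w. graph_iso G G \<phi>V \<phi>E \<Longrightarrow> w \<in> words G0 R \<Longrightarrow> length (snd w) = N \<Longrightarrow>
      \<exists>t\<in>words G0 R. canonical_on G0 G0 R vi vt w t (inv_into X0 f \<circ> base_map G G R vi vt \<phi>E \<circ> f)"
    using canonical_level by blast
  have "rearrangement G0 G0 R vi vt (conj_aut \<phi>)"
  proof (rule rearrangementI[OF terminals_nonadjacent_R finite_edges homeo])
    have "canonical_on G0 G0 R vi vt w t (conj_aut \<phi>) =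
        canonical_on G0 G0 R vi vt w t (inv_into X0 f \<circ> base_map G G R vi vt (snd \<phi>) \<circ> f)" for w t
      by (rule canonical_on_cong) (simp add: conj_aut_def)
    then show "\<exists>t\<in>words G0 R. canonical_on G0 G0 R vi vt w t (conj_aut \<phi>)"
      if "w \<in> words G0 R" "length (snd w) = N" for w
      using N[OF iso that] by simp
  qed
  then show ?thesis by (simp add: rearr_group_def conj_aut_def)
qed

lemma conj_aut_in_stabilizer:
  assumes "\<phi> \<in> carrier (aut_group G)"
  shows "conj_aut \<phi> \<in> stabilizer G0 R vi vt G f"
proof -
  have iso: "graph_iso G G (fst \<phi>) (snd \<phi>)" using aut_groupD[OF assms] by simp
  have "f x = base_map G G R vi vt (inv_into (edges G) (snd \<phi>)) (compose X0 f (conj_aut \<phi>) x)"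
    if "x \<in> X0" for x
  proof -
    have "f x \<in> X" using that by (rule f_in_X)
    then have "compose X0 f (conj_aut \<phi>) x = base_map G G R vi vt (snd \<phi>) (f x)"
      using that aut_base_map_in_X[OF assms] by (simp add: compose_def conj_aut_apply f_inv_f)
    then show ?thesis using base_map_inv[OF terminals_nonadjacent_R iso fin_graph_G \<open>f x \<in> X\<close>] by simp
  qed
  then have "range_equiv G0 R vi vt G (compose X0 f (conj_aut \<phi>)) G f"
    unfolding range_equiv_def using graph_iso_inv[OF iso fin_graph_G] by blast
  then show ?thesis using conj_aut_in_carrier[OF assms] by (simp add: stabilizer_def)
qed

lemma conj_aut_mult:
  assumes "\<phi> \<in> carrier (aut_group G)" "\<psi> \<in> carrier (aut_group G)"
  shows "conj_aut (\<phi> \<otimes>\<^bsub>aut_group G\<^esub> \<psi>) = conj_aut \<phi> \<otimes>\<^bsub>rearr_group G0 R vi vt\<^esub> conj_aut \<psi>"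
proof
  fix x
  let ?b = "\<lambda>\<phi>. base_map G G R vi vt (snd \<phi>)"
  show "conj_aut (\<phi> \<otimes>\<^bsub>aut_group G\<^esub> \<psi>) x = (conj_aut \<phi> \<otimes>\<^bsub>rearr_group G0 R vi vt\<^esub> conj_aut \<psi>) x"
  proof (cases "x \<in> X0")
    case True
    have y: "f x \<in> X" using True by (rule f_in_X)
    have "snd (\<phi> \<otimes>\<^bsub>aut_group G\<^esub> \<psi>) = compose (edges G) (snd \<phi>) (snd \<psi>)"
      by (simp add: aut_group_def split_beta)
    then have "?b (\<phi> \<otimes>\<^bsub>aut_group G\<^esub> \<psi>) (f x) = base_map G G R vi vt (snd \<phi> \<circ> snd \<psi>) (f x)"
      by (simp add: compose_def) (rule base_map_cong[OF y], simp)
    also have "\<dots> = ?b \<phi> (?b \<psi> (f x))"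
      using base_map_comp[OF terminals_nonadjacent_R _ _ fin_graph_G fin_graph_G y] aut_groupD assms by blast
    moreover have "inv_into X0 f (?b \<psi> (f x)) \<in> X0" "f (inv_into X0 f (?b \<psi> (f x))) = ?b \<psi> (f x)"
      using aut_base_map_in_X[OF assms(2) y] by (simp_all add: inv_f_in_X0 f_inv_f)
    ultimately show ?thesis
      using True by (simp add: conj_aut_apply rearr_group_def compose_def)
  qed (simp add: conj_aut_def rearr_group_def compose_def)
qed

lemma inj_on_conj_aut:
  assumes "no_isolated G"
  shows "inj_on conj_aut (carrier (aut_group G))"
proof (rule inj_onI)
  fix \<phi> \<psi> assume \<phi>: "\<phi> \<in> carrier (aut_group G)" and \<psi>: "\<psi> \<in> carrier (aut_group G)"
    and eq: "conj_aut \<phi> = conj_aut \<psi>"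
  have "base_map G G R vi vt (snd \<phi>) y = base_map G G R vi vt (snd \<psi>) y" if y: "y \<in> X" for y
  proof -
    have "inj_on (inv_into X0 f) X" using bij_betw_f by (simp add: bij_betw_def inj_on_inv_into)
    moreover have "inv_into X0 f y \<in> X0" "f (inv_into X0 f y) = y"
      using y bij_betw_f by (simp_all add: bij_betw_def inv_into_into f_inv_into_f)
    ultimately show ?thesis
      using fun_cong[OF eq, of "inv_into X0 f y"] aut_base_map_in_X[OF \<phi> y] aut_base_map_in_X[OF \<psi> y]
      by (simp add: conj_aut_apply inj_on_eq_iff)
  qed
  then have "snd \<phi> e = snd \<psi> e" if "e \<in> edges G" for e
    using base_map_determines_edge_map[OF expanding_rule_R _ _ fin_graph_G _ that]
      aut_groupD[OF \<phi>] aut_groupD[OF \<psi>] by blast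
  then show "\<phi> = \<psi>" by (rule aut_group_eqI[OF assms \<phi> \<psi>])
qed

lemma stabilizer_subset_conj_aut_image:
  "stabilizer G0 R vi vt G f \<subseteq> conj_aut ` carrier (aut_group G)"
proof
  fix g assume g: "g \<in> stabilizer G0 R vi vt G f"
  then have "homeomorphic_map (Xtop G0 R vi vt) (Xtop G0 R vi vt) g" "g \<in> extensional X0"
    by (simp_all add: stabilizer_def rearr_group_def rearrangement_def)
  then have gX0: "g x \<in> X0" if "x \<in> X0" for x
    using homeomorphic_imp_surjective_map that by (fastforce simp: topspace_Xtop)
  obtain \<phi>V \<phi>E where iso: "graph_iso G G \<phi>V \<phi>E"
    and fg: "\<And>x. x \<in> X0 \<Longrightarrow> f x = base_map G G R vi vt \<phi>E (f (g x))"
    using g by (auto simp: stabilizer_def range_equiv_def compose_def)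
  define \<psi> where "\<psi> = (restrict (inv_into (verts G) \<phi>V) (verts G), restrict (inv_into (edges G) \<phi>E) (edges G))"
  have "graph_iso G G (fst \<psi>) (snd \<psi>)"
    unfolding \<psi>_def by (rule graph_iso_cong[OF graph_iso_inv[OF iso fin_graph_G] fin_graph_G]) simp_all
  then have \<psi>: "\<psi> \<in> carrier (aut_group G)" by (simp add: aut_group_def \<psi>_def)
  have "conj_aut \<psi> x = g x" for x
  proof (cases "x \<in> X0")
    case True
    have y: "f (g x) \<in> X" using gX0[OF True] by (rule f_in_X)
    have "base_map G G R vi vt (snd \<psi>) (f x) = base_map G G R vi vt (inv_into (edges G) \<phi>E) (f x)"
      by (rule base_map_cong[OF f_in_X[OF True]]) (simp add: \<psi>_def)
    also have "\<dots> = f (g x)" using fg[OF True] base_map_inv[OF terminals_nonadjacent_R iso fin_graph_G y] by simp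
    finally show ?thesis
      using True gX0[OF True] bij_betw_f by (simp add: conj_aut_apply bij_betw_inv_into_left)
  qed (use g in \<open>simp add: conj_aut_def stabilizer_def rearr_group_def extensional_def\<close>)
  then show "g \<in> conj_aut ` carrier (aut_group G)" using \<psi> by (metis image_eqI ext)
qed

lemma conj_aut_iso:
  assumes "no_isolated G"
  shows "conj_aut \<in> iso (aut_group G) ((rearr_group G0 R vi vt)\<lparr>carrier := stabilizer G0 R vi vt G f\<rparr>)"
proof (rule isoI)
  show "conj_aut \<in> hom (aut_group G) ((rearr_group G0 R vi vt)\<lparr>carrier := stabilizer G0 R vi vt G f\<rparr>)"
    using conj_aut_in_stabilizer conj_aut_mult by (auto simp: hom_def)
  show "bij_betw conj_aut (carrier (aut_group G))
      (carrier ((rearr_group G0 R vi vt)\<lparr>carrier := stabilizer G0 R vi vt G f\<rparr>))"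
    using inj_on_conj_aut[OF assms] conj_aut_in_stabilizer stabilizer_subset_conj_aut_image
    by (auto simp: bij_betw_def)
qed

end

theorem proposition3p10:
  fixes G0 :: "('v, 'e) dgraph" and R :: "('w, 'r) dgraph" and vi vt :: 'w
    and G :: "('u, 'd) dgraph"
    and f :: "('e \<times> (nat \<Rightarrow> 'r)) set \<Rightarrow> ('d \<times> (nat \<Rightarrow> 'r)) set"
  assumes "expanding G0 R vi vt"
    and "fin_graph G" and "no_isolated G"
    and "rearrangement G0 G R vi vt f"
  shows "finite (stabilizer G0 R vi vt G f) \<and>
         (rearr_group G0 R vi vt)\<lparr>carrier := stabilizer G0 R vi vt G f\<rparr> \<cong> aut_group G"
proof -
  interpret rearr_vertex G0 R vi vt G f
    using assms(1,2,4) by unfold_locales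
  let ?St = "(rearr_group G0 R vi vt)\<lparr>carrier := stabilizer G0 R vi vt G f\<rparr>"
  have iso: "conj_aut \<in> iso (aut_group G) ?St" by (rule conj_aut_iso[OF assms(3)])
  then have "inv_into (carrier (aut_group G)) conj_aut \<in> iso ?St (aut_group G)"
    by (rule inv_into_iso) (rule aut_group_mult_closed[OF assms(2)])
  moreover have "stabilizer G0 R vi vt G f = conj_aut ` carrier (aut_group G)"
    using iso by (simp add: iso_def bij_betw_def)
  ultimately show ?thesis
    using finite_carrier_aut_group[OF assms(2)] by (auto intro: is_isoI)
qed

end
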